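(* Let $n\ge 0$ and $0\le k\le n$ be integers. The number of isomorphism classes of linear Nakayama algebras $A$ with $n+2$ simple modules such that $\dim_K\operatorname{Ext}^1_A(J,J)=k$, where $J$ is the Jacobson radical of $A$, equals the number of standard Young tableaux of shape $[n,k]$. In particular, the number of such Nakayama algebras for which $\dim_K\operatorname{Ext}^1_A(J,J)$ equals the maximal possible value $n$ is the Catalan number $C_n=\frac{1}{n+1}\binom{2n}{n}$.
   Context: $K$ is a field. A linear Nakayama algebra with $m$ simple modules is a connected algebra $KQ/I$ with $Q$ the linearly oriented quiver $0\to1\to\cdots\to m-1$ and $I$ an admissible ideal; modules are finite-dimensional right modules and $J$ is the Jacobson radical regarded as a right module. A standard Young tableau of shape $[n,k]$ is a filling of the Young diagram with two rows of lengths $n$ and $k$ (one row if $k=0$) by $1,\dots,n+k$, increasing along rows and down columns. *)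

theory Defs
  imports Main "HOL-Library.Function_Algebras" "Jordan_Normal_Form.Matrix"
begin

text \<open>Paths of the linear quiver 0 -> 1 -> ... -> m-1 are identified with pairs (i,j), i <= j < m
(the unique path from i to j, of length j - i). Every ideal of KQ is spanned by the paths it
contains (between two vertices there is at most one path), so an admissible ideal I is the
same as a set of paths of length >= 2 closed under left and right extension (admissibility's
condition R^N contained in I is automatic, Q being finite and acyclic).\<close>

definition lin_nak_ideal :: "nat \<Rightarrow> (nat \<times> nat) set \<Rightarrow> bool" where
  "lin_nak_ideal m I \<longleftrightarrow>
     I \<subseteq> {(i, j). i + 2 \<le> j \<and> j < m} \<and>
     (\<forall>i j i' j'. (i, j) \<in> I \<longrightarrow> i' \<le> i \<longrightarrow> j \<le> j' \<longrightarrow> j' < m \<longrightarrow> (i', j') \<in> I)"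

text \<open>A representation is given by dimensions d j and matrices f j : K^(d j) -> K^(d (j+1)).
pmap d f i l is the linear map along the path of length l starting at i.\<close>

fun pmap :: "(nat \<Rightarrow> nat) \<Rightarrow> (nat \<Rightarrow> 'k::field mat) \<Rightarrow> nat \<Rightarrow> nat \<Rightarrow> 'k mat" where
  "pmap d f i 0 = 1\<^sub>m (d i)"
| "pmap d f i (Suc l) = f (i + l) * pmap d f i l"

definition is_rep :: "nat \<Rightarrow> (nat \<times> nat) set \<Rightarrow> (nat \<Rightarrow> nat) \<Rightarrow> (nat \<Rightarrow> 'k::field mat) \<Rightarrow> bool" where
  "is_rep m I d f \<longleftrightarrow>
     (\<forall>j. Suc j < m \<longrightarrow> f j \<in> carrier_mat (d (Suc j)) (d j)) \<and>
     (\<forall>(i, j) \<in> I. pmap d f i (j - i) = 0\<^sub>m (d j) (d i))"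

text \<open>An extension 0 -> N -> E -> M -> 0 has E_j = N_j (+) M_j and structure maps
[[fN j, h j], [0, fM j]]; h is encoded by its coordinates hc j r s.
Ext^1(M,N) = Z / B, where Z = those h for which E is a module over KQ/I and
B = those h giving an extension equivalent to the split one.\<close>

definition hmat :: "(nat \<Rightarrow> nat) \<Rightarrow> (nat \<Rightarrow> nat) \<Rightarrow> (nat \<Rightarrow> nat \<Rightarrow> nat \<Rightarrow> 'k) \<Rightarrow> nat \<Rightarrow> 'k mat" where
  "hmat dM dN hc j = mat (dN (Suc j)) (dM j) (\<lambda>(r, s). hc j r s)"

definition hsupp :: "nat \<Rightarrow> (nat \<Rightarrow> nat) \<Rightarrow> (nat \<Rightarrow> nat) \<Rightarrow> (nat \<Rightarrow> nat \<Rightarrow> nat \<Rightarrow> 'k::zero) \<Rightarrow> bool" where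
  "hsupp m dM dN hc \<longleftrightarrow>
     (\<forall>j r s. hc j r s \<noteq> 0 \<longrightarrow> Suc j < m \<and> r < dN (Suc j) \<and> s < dM j)"

definition ext_cocycles ::
  "nat \<Rightarrow> (nat \<times> nat) set \<Rightarrow> (nat \<Rightarrow> nat) \<Rightarrow> (nat \<Rightarrow> 'k::field mat) \<Rightarrow>
   (nat \<Rightarrow> nat) \<Rightarrow> (nat \<Rightarrow> 'k mat) \<Rightarrow> (nat \<Rightarrow> nat \<Rightarrow> nat \<Rightarrow> 'k) set" where
  "ext_cocycles m I dM fM dN fN =
     {hc. hsupp m dM dN hc \<and>
          is_rep m I (\<lambda>j. dN j + dM j)
            (\<lambda>j. four_block_mat (fN j) (hmat dM dN hc j) (0\<^sub>m (dM (Suc j)) (dN j)) (fM j))}"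

definition ext_coboundaries ::
  "nat \<Rightarrow> (nat \<Rightarrow> nat) \<Rightarrow> (nat \<Rightarrow> 'k::field mat) \<Rightarrow>
   (nat \<Rightarrow> nat) \<Rightarrow> (nat \<Rightarrow> 'k mat) \<Rightarrow> (nat \<Rightarrow> nat \<Rightarrow> nat \<Rightarrow> 'k) set" where
  "ext_coboundaries m dM fM dN fN =
     {hc. hsupp m dM dN hc \<and>
          (\<exists>g. (\<forall>j<m. g j \<in> carrier_mat (dN j) (dM j)) \<and>
               (\<forall>j. Suc j < m \<longrightarrow> hmat dM dN hc j = fN j * g j - g (Suc j) * fM j))}"

definition cscale :: "'k::field \<Rightarrow> (nat \<Rightarrow> nat \<Rightarrow> nat \<Rightarrow> 'k) \<Rightarrow> (nat \<Rightarrow> nat \<Rightarrow> nat \<Rightarrow> 'k)" where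
  "cscale c hc = (\<lambda>j r s. c * hc j r s)"

definition ext1_dim ::
  "nat \<Rightarrow> (nat \<times> nat) set \<Rightarrow> (nat \<Rightarrow> nat) \<Rightarrow> (nat \<Rightarrow> 'k::field mat) \<Rightarrow>
   (nat \<Rightarrow> nat) \<Rightarrow> (nat \<Rightarrow> 'k mat) \<Rightarrow> nat" where
  "ext1_dim m I dM fM dN fN =
     vector_space.dim cscale (ext_cocycles m I dM fM dN fN)
     - vector_space.dim cscale (ext_coboundaries m dM fM dN fN)"

text \<open>(A_A) e_j has basis the nonzero paths ending at j; J e_j has basis the nonzero paths
of length >= 1 ending at j, i.e. the starting points i < j with (i,j) not in I (listed
increasingly). The arrow j -> j+1 acts by p |-> p alpha.\<close>

definition jbasis :: "(nat \<times> nat) set \<Rightarrow> nat \<Rightarrow> nat list" where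
  "jbasis I j = filter (\<lambda>i. (i, j) \<notin> I) [0..<j]"

definition jdim :: "(nat \<times> nat) set \<Rightarrow> nat \<Rightarrow> nat" where
  "jdim I j = length (jbasis I j)"

definition jmap :: "(nat \<times> nat) set \<Rightarrow> nat \<Rightarrow> 'k::field mat" where
  "jmap I j = mat (jdim I (Suc j)) (jdim I j)
     (\<lambda>(r, s). if jbasis I (Suc j) ! r = jbasis I j ! s then 1 else 0)"

definition ext1_JJ :: "'k::field itself \<Rightarrow> nat \<Rightarrow> (nat \<times> nat) set \<Rightarrow> nat" where
  "ext1_JJ (_ :: 'k itself) m I =
     ext1_dim m I (jdim I) (jmap I :: nat \<Rightarrow> 'k mat) (jdim I) (jmap I)"

definition syt_cells :: "nat \<Rightarrow> nat \<Rightarrow> (nat \<times> nat) set" where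
  "syt_cells n k = {(0, c) | c. c < n} \<union> {(1, c) | c. c < k}"

definition is_syt :: "nat \<Rightarrow> nat \<Rightarrow> (nat \<times> nat \<Rightarrow> nat) \<Rightarrow> bool" where
  "is_syt n k T \<longleftrightarrow>
     bij_betw T (syt_cells n k) {1..n + k} \<and>
     (\<forall>p. p \<notin> syt_cells n k \<longrightarrow> T p = 0) \<and>
     (\<forall>r c. (r, c) \<in> syt_cells n k \<and> (r, Suc c) \<in> syt_cells n k \<longrightarrow> T (r, c) < T (r, Suc c)) \<and>
     (\<forall>c. (0, c) \<in> syt_cells n k \<and> (1, c) \<in> syt_cells n k \<longrightarrow> T (0, c) < T (1, c))"

definition syt_count :: "nat \<Rightarrow> nat \<Rightarrow> nat" where
  "syt_count n k = card {T. is_syt n k T}"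

end

theory Submission
  imports Defs
begin

(* An admissible ideal I of the linear quiver 0 -> ... -> m-1 is determined by its cutoffs
   c_i = min {j. i -> j lies in I} (or m), a weakly increasing sequence with min (i+2) m <= c_i <= m.
   Computing Ext^1(J,J) with explicit extensions of representations, a cochain is a coboundary iff
   its coefficient sums vanish for all pairs v < u < c_v < c_u, and a cocycle iff they vanish for
   those pairs that are witnessed by a relation, i.e. for which c_(v+1) < c_u.  Hence
   dim Ext^1(J,J) counts the pairs v < u < c_v < c_u with c_(v+1) = c_u.  Removing the first entry
   of the cutoff sequence gives a recursion for the number of sequences with a given count, which
   is the recursion of the ballot numbers; removing the largest entry of a standard Young tableau
   of shape [n,k] gives the same recursion.  The diagonal ballot number is the Catalan number. *)

section \<open>Ballot numbers and standard Young tableaux\<close>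

fun ballot :: "nat \<Rightarrow> nat \<Rightarrow> nat" where
  "ballot 0 k = (if k = 0 then 1 else 0)"
| "ballot (Suc n) k = (if k \<le> Suc n then (\<Sum>i\<le>k. ballot n i) else 0)"

lemma ballot_eq_0: "n < k \<Longrightarrow> ballot n k = 0"
  by (cases n) auto

lemma ballot_0_right [simp]: "ballot n 0 = 1"
  by (induction n) auto

lemma ballot_Suc:
  "k \<le> Suc n \<Longrightarrow> ballot (Suc n) k = ballot n k + (if k = 0 then 0 else ballot (Suc n) (k - 1))"
  by (cases k) auto

lemma ballot_binomial:
  assumes "k \<le> n"
  shows "int (ballot n (Suc k)) = int ((n + Suc k) choose Suc k) - int ((n + Suc k) choose k)"
  using assms
proof (induction "n + k" arbitrary: n k rule: less_induct)
  case less
  show ?case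
  proof (cases "k < n")
    case False
    then have "n = k" using less.prems by simp
    moreover have "(k + Suc k) choose Suc k = (k + Suc k) choose k"
      using binomial_symmetric[of "Suc k" "k + Suc k"] by simp
    ultimately show ?thesis using ballot_eq_0[of n "Suc k"] by simp
  next
    case True
    then obtain p where n: "n = Suc p" by (cases n) auto
    have rec: "ballot n (Suc k) = ballot p (Suc k) + ballot n k"
      using ballot_Suc[of "Suc k" p] True n by simp
    have ih1: "int (ballot p (Suc k)) = int ((n + k) choose Suc k) - int ((n + k) choose k)"
      using less.hyps[of p k] True n by simp
    have pascal: "(n + Suc k) choose Suc k = ((n + k) choose k) + ((n + k) choose Suc k)"
      by simp
    show ?thesis
    proof (cases k)
      case 0
      then show ?thesis using rec ih1 pascal by simp
    next
      case (Suc k')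
      have ih2: "int (ballot n k) = int ((n + k) choose k) - int ((n + k) choose k')"
        using less.hyps[of n k'] less.prems Suc by simp
      have "(n + Suc k) choose k = ((n + k) choose k') + ((n + k) choose k)"
        using Suc by simp
      then show ?thesis using rec ih1 ih2 pascal by simp
    qed
  qed
qed

lemma ballot_diag_catalan: "real (ballot n n) = real ((2 * n) choose n) / real (n + 1)"
proof (cases n)
  case 0
  then show ?thesis by simp
next
  case (Suc p)
  define C where "C = real ((2 * n) choose n)"
  define D where "D = real ((2 * n) choose p)"
  have "int (ballot n n) = int ((2 * n) choose n) - int ((2 * n) choose p)"
    using ballot_binomial[of p n] Suc by (simp add: mult_2)
  then have ballot: "real (ballot n n) = C - D"
    unfolding C_def D_def by (metis of_int_diff of_int_of_nat_eq)
  have "n * ((2 * n) choose n) = (n + 1) * ((2 * n) choose p)"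
    using Suc_times_binomial_add[of p n] Suc by (simp del: binomial_Suc_Suc add: mult_2)
  then have "real (n * ((2 * n) choose n)) = real ((n + 1) * ((2 * n) choose p))"
    by (rule arg_cong)
  then have "real n * C = real (n + 1) * D"
    unfolding C_def D_def of_nat_mult .
  then have "(C - D) * real (n + 1) = C"
    by (simp add: algebra_simps)
  then show ?thesis
    unfolding ballot C_def[symmetric] by (simp add: field_simps)
qed

lemma syt_cells_iff [simp]: "(r, c) \<in> syt_cells n k \<longleftrightarrow> (r = 0 \<and> c < n) \<or> (r = 1 \<and> c < k)"
  by (auto simp: syt_cells_def)

lemma is_syt_range: "is_syt n k T \<Longrightarrow> p \<in> syt_cells n k \<Longrightarrow> T p \<in> {1..n + k}"
  unfolding is_syt_def bij_betw_def by auto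

lemma is_syt_inj: "is_syt n k T \<Longrightarrow> p \<in> syt_cells n k \<Longrightarrow> q \<in> syt_cells n k \<Longrightarrow> T p = T q \<Longrightarrow> p = q"
  unfolding is_syt_def bij_betw_def inj_on_def by blast

lemma is_syt_0_0: "{T. is_syt 0 0 T} = {\<lambda>_. 0}"
  unfolding is_syt_def bij_betw_def syt_cells_def by auto

lemma bij_betw_fun_upd_insert:
  "bij_betw T A B \<Longrightarrow> p \<notin> A \<Longrightarrow> v \<notin> B \<Longrightarrow> bij_betw (T(p := v)) (insert p A) (insert v B)"
  unfolding bij_betw_def inj_on_def by (auto simp: image_def)

lemma bij_betw_fun_upd_remove:
  "bij_betw T A B \<Longrightarrow> p \<in> A \<Longrightarrow> bij_betw (T(p := v)) (A - {p}) (B - {T p})"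
  unfolding bij_betw_def inj_on_def by (auto simp: image_def)

lemma card_image_fun_upd:
  assumes "\<forall>T\<in>A. T p = 0"
  shows "card ((\<lambda>T. T(p := v)) ` A) = card A"
proof (rule card_image, rule inj_onI)
  fix T1 T2 assume "T1 \<in> A" "T2 \<in> A" and eq: "T1(p := v) = T2(p := v)"
  then have "T1 p = 0" "T2 p = 0" using assms by auto
  then show "T1 = T2" using eq by (simp add: fun_eq_iff) metis
qed

lemma is_syt_max_cell:
  assumes T: "is_syt n k T" and "0 < n + k"
  shows "(0 < n \<and> T (0, n - 1) = n + k) \<or> (0 < k \<and> T (1, k - 1) = n + k)"
proof -
  obtain r c where p: "(r, c) \<in> syt_cells n k" "T (r, c) = n + k"
    using T assms(2) unfolding is_syt_def bij_betw_def
    by (metis atLeastAtMost_iff imageE le_add2 le_refl less_one not_le surj_pair)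
  have "(r, Suc c) \<notin> syt_cells n k"
  proof
    assume next_cell: "(r, Suc c) \<in> syt_cells n k"
    then have "T (r, c) < T (r, Suc c)"
      using p(1) T unfolding is_syt_def by blast
    moreover have "T (r, Suc c) \<le> n + k"
      using is_syt_range[OF T next_cell] by simp
    ultimately show False using p by simp
  qed
  then have "(r = 0 \<and> c = n - 1 \<and> 0 < n) \<or> (r = 1 \<and> c = k - 1 \<and> 0 < k)"
    using p(1) by auto
  then show ?thesis using p(2) by blast
qed

lemma is_syt_remove_row0:
  assumes T: "is_syt (Suc n) k T" and v: "T (0, n) = Suc n + k" and "k \<le> Suc n"
  shows "k < Suc n \<and> is_syt n k (T((0, n) := 0))"
proof -
  have "k < Suc n"
  proof (rule ccontr)
    assume "\<not> k < Suc n"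
    then have "T (0, n) < T (1, n)" "T (1, n) \<le> Suc n + k"
      using T is_syt_range[OF T, of "(1, n)"] assms(3) unfolding is_syt_def by auto
    then show False using v by simp
  qed
  moreover have "syt_cells (Suc n) k - {(0, n)} = syt_cells n k" "{1..Suc n + k} - {Suc n + k} = {1..n + k}"
    by auto
  then have "bij_betw (T((0, n) := 0)) (syt_cells n k) {1..n + k}"
    using bij_betw_fun_upd_remove[of T "syt_cells (Suc n) k" "{1..Suc n + k}" "(0, n)"] T v
    unfolding is_syt_def by auto
  ultimately show ?thesis using T unfolding is_syt_def by auto
qed

lemma is_syt_extend_row0:
  assumes T: "is_syt n k T" and "k < Suc n"
  shows "is_syt (Suc n) k (T((0, n) := Suc n + k))"
  unfolding is_syt_def
proof (intro conjI allI impI)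
  have "syt_cells (Suc n) k = insert (0, n) (syt_cells n k)" "{1..Suc n + k} = insert (Suc n + k) {1..n + k}"
    by auto
  then show "bij_betw (T((0, n) := Suc n + k)) (syt_cells (Suc n) k) {1..Suc n + k}"
    using T by (auto simp: is_syt_def intro: bij_betw_fun_upd_insert)
next
  fix p assume "p \<notin> syt_cells (Suc n) k"
  then show "(T((0, n) := Suc n + k)) p = 0"
    using T unfolding is_syt_def by (cases p) auto
next
  fix r c assume cells: "(r, c) \<in> syt_cells (Suc n) k \<and> (r, Suc c) \<in> syt_cells (Suc n) k"
  show "(T((0, n) := Suc n + k)) (r, c) < (T((0, n) := Suc n + k)) (r, Suc c)"
  proof (cases "(r, Suc c) = (0, n)")
    case True
    then show ?thesis using is_syt_range[OF T, of "(r, c)"] by auto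
  next
    case False
    then have "(r, c) \<in> syt_cells n k \<and> (r, Suc c) \<in> syt_cells n k" "(r, c) \<noteq> (0, n)"
      using cells assms(2) by auto
    then show ?thesis using False T unfolding is_syt_def by auto
  qed
next
  fix c assume "(0, c) \<in> syt_cells (Suc n) k \<and> (1, c) \<in> syt_cells (Suc n) k"
  then have "(0, c) \<in> syt_cells n k \<and> (1, c) \<in> syt_cells n k" "c \<noteq> n" using assms(2) by auto
  then show "(T((0, n) := Suc n + k)) (0, c) < (T((0, n) := Suc n + k)) (1, c)"
    using T unfolding is_syt_def by auto
qed

lemma is_syt_remove_row1:
  assumes T: "is_syt n (Suc k) T" and v: "T (1, k) = n + Suc k"
  shows "is_syt n k (T((1, k) := 0))"
proof -
  have "syt_cells n (Suc k) - {(1, k)} = syt_cells n k" "{1..n + Suc k} - {n + Suc k} = {1..n + k}"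
    by auto
  then have "bij_betw (T((1, k) := 0)) (syt_cells n k) {1..n + k}"
    using bij_betw_fun_upd_remove[of T "syt_cells n (Suc k)" "{1..n + Suc k}" "(1, k)"] T v
    unfolding is_syt_def by auto
  then show ?thesis using T unfolding is_syt_def by auto
qed

lemma is_syt_extend_row1:
  assumes T: "is_syt n k T" and "Suc k \<le> n"
  shows "is_syt n (Suc k) (T((1, k) := n + Suc k))"
  unfolding is_syt_def
proof (intro conjI allI impI)
  have "syt_cells n (Suc k) = insert (1, k) (syt_cells n k)" "{1..n + Suc k} = insert (n + Suc k) {1..n + k}"
    by auto
  then show "bij_betw (T((1, k) := n + Suc k)) (syt_cells n (Suc k)) {1..n + Suc k}"
    using T by (auto simp: is_syt_def intro: bij_betw_fun_upd_insert)
next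
  fix p assume "p \<notin> syt_cells n (Suc k)"
  then show "(T((1, k) := n + Suc k)) p = 0"
    using T unfolding is_syt_def by (cases p) auto
next
  fix r c assume cells: "(r, c) \<in> syt_cells n (Suc k) \<and> (r, Suc c) \<in> syt_cells n (Suc k)"
  show "(T((1, k) := n + Suc k)) (r, c) < (T((1, k) := n + Suc k)) (r, Suc c)"
  proof (cases "(r, Suc c) = (1, k)")
    case True
    then show ?thesis using is_syt_range[OF T, of "(r, c)"] by auto
  next
    case False
    then have "(r, c) \<in> syt_cells n k \<and> (r, Suc c) \<in> syt_cells n k" "(r, c) \<noteq> (1, k)"
      using cells assms(2) by auto
    then show ?thesis using False T unfolding is_syt_def by auto
  qed
next
  fix c assume cells: "(0, c) \<in> syt_cells n (Suc k) \<and> (1, c) \<in> syt_cells n (Suc k)"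
  show "(T((1, k) := n + Suc k)) (0, c) < (T((1, k) := n + Suc k)) (1, c)"
  proof (cases "c = k")
    case True
    then show ?thesis using is_syt_range[OF T, of "(0, c)"] assms(2) by auto
  next
    case False
    then have "(0, c) \<in> syt_cells n k \<and> (1, c) \<in> syt_cells n k" using cells by auto
    then show ?thesis using False T unfolding is_syt_def by auto
  qed
qed

lemma finite_syt: "finite {T. is_syt n k T}"
proof (rule finite_subset)
  show "{T. is_syt n k T} \<subseteq> {T. \<forall>p. (p \<in> syt_cells n k \<longrightarrow> T p \<in> {1..n + k}) \<and> (p \<notin> syt_cells n k \<longrightarrow> T p = 0)}"
    using is_syt_range unfolding is_syt_def by blast
  have "syt_cells n k \<subseteq> {0, 1} \<times> {..<n + k}" by auto
  then show "finite {T. \<forall>p. (p \<in> syt_cells n k \<longrightarrow> T p \<in> {1..n + k}) \<and> (p \<notin> syt_cells n k \<longrightarrow> T p = 0)}"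
    by (intro finite_set_of_finite_funs) (auto intro: finite_subset)
qed

lemma syt_set_Suc:
  assumes "k \<le> Suc n"
  shows "{T. is_syt (Suc n) k T} =
    (if k < Suc n then (\<lambda>T. T((0, n) := Suc n + k)) ` {T. is_syt n k T} else {}) \<union>
    (if 0 < k then (\<lambda>T. T((1, k - 1) := Suc n + k)) ` {T. is_syt (Suc n) (k - 1) T} else {})"
    (is "?L = ?A \<union> ?B")
proof
  show "?L \<subseteq> ?A \<union> ?B"
  proof
    fix T assume "T \<in> ?L"
    then have T: "is_syt (Suc n) k T" by simp
    from is_syt_max_cell[OF T] consider "T (0, n) = Suc n + k" | k' where "k = Suc k'" "T (1, k') = Suc n + k"
      by (cases k) auto
    then show "T \<in> ?A \<union> ?B"
    proof cases
      case 1
      with is_syt_remove_row0[OF T _ assms] have "k < Suc n" "is_syt n k (T((0, n) := 0))" by auto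
      moreover have "T = (T((0, n) := 0))((0, n) := Suc n + k)" using 1 by auto
      ultimately show ?thesis by (auto intro!: image_eqI[of _ _ "T((0, n) := 0)"])
    next
      case 2
      then have "is_syt (Suc n) k' (T((1, k') := 0))" using is_syt_remove_row1[of "Suc n" k' T] T by simp
      moreover have "T = (T((1, k') := 0))((1, k') := Suc n + k)" using 2 by auto
      ultimately show ?thesis using 2 by (auto intro!: image_eqI[of _ _ "T((1, k') := 0)"])
    qed
  qed
next
  show "?A \<union> ?B \<subseteq> ?L"
    using is_syt_extend_row0[of n k] is_syt_extend_row1[of "Suc n" "k - 1"] assms
    by (auto split: if_splits)
qed

lemma card_syt_fun_upd:
  "p \<notin> syt_cells n k \<Longrightarrow> card ((\<lambda>T. T(p := v)) ` {T. is_syt n k T}) = card {T. is_syt n k T}"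
  by (rule card_image_fun_upd) (auto simp only: is_syt_def mem_Collect_eq)

lemma syt_count_eq_ballot: "k \<le> n \<Longrightarrow> syt_count n k = ballot n k"
  unfolding syt_count_def
proof (induction "n + k" arbitrary: n k rule: less_induct)
  case less
  show ?case
  proof (cases n)
    case 0
    then show ?thesis using less.prems is_syt_0_0 by simp
  next
    case (Suc p)
    define A where "A = (if k < Suc p then (\<lambda>T. T((0, p) := Suc p + k)) ` {T. is_syt p k T} else {})"
    define B where "B = (if 0 < k then (\<lambda>T. T((1, k - 1) := Suc p + k)) ` {T. is_syt (Suc p) (k - 1) T} else {})"
    have split: "{T. is_syt n k T} = A \<union> B"
      unfolding A_def B_def Suc using syt_set_Suc less.prems Suc by simp
    have card_A: "card A = ballot p k"
      using less.hyps[of p k] Suc card_syt_fun_upd[of "(0, p)" p k] ballot_eq_0[of p k] unfolding A_def by auto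
    have card_B: "card B = (if k = 0 then 0 else ballot (Suc p) (k - 1))"
      using less.hyps[of "Suc p" "k - 1"] Suc less.prems card_syt_fun_upd[of "(1, k - 1)" "Suc p" "k - 1"]
      unfolding B_def by auto
    have "A \<inter> B = {}"
    proof (rule ccontr)
      assume "A \<inter> B \<noteq> {}"
      then obtain T where T: "T \<in> A" "T \<in> B" by blast
      then have k: "k < Suc p" "0 < k" unfolding A_def B_def by (auto split: if_splits)
      have "is_syt (Suc p) k T" using split T Suc by blast
      moreover have "T (0, p) = Suc p + k" using T(1) k unfolding A_def by auto
      moreover have "T (1, k - 1) = Suc p + k" using T(2) k unfolding B_def by auto
      ultimately show False using is_syt_inj[of "Suc p" k T "(0, p)" "(1, k - 1)"] k by auto
    qed
    moreover have "finite A" "finite B"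
      unfolding A_def B_def using finite_syt by auto
    ultimately show ?thesis
      using split card_A card_B ballot_Suc[of k p] less.prems Suc by (simp add: card_Un_disjoint)
  qed
qed

section \<open>Cutoff sequences counted by extension pairs\<close>

definition cutoff_seqs :: "nat \<Rightarrow> nat list set" where
  "cutoff_seqs m = {c. length c = m \<and> sorted c \<and> (\<forall>i<m. min (i + 2) m \<le> c ! i \<and> c ! i \<le> m)}"

definition ext_pairs :: "nat list \<Rightarrow> (nat \<times> nat) set" where
  "ext_pairs c = {(u, v). v < u \<and> u < length c \<and> u < c ! v \<and> c ! v < c ! u \<and> c ! Suc v = c ! u}"

definition head_run :: "nat \<Rightarrow> nat list \<Rightarrow> nat" where
  "head_run u c = card {i. i < u \<and> i < length c \<and> c ! i = c ! 0}"

text \<open>For \<^term>\<open>u < c ! 0\<close>, \<^term>\<open>ext_weight u c\<close> is the number of extension pairs of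
  \<^term>\<open>Suc u # map Suc c\<close>; counting by this refined statistic makes the numbers satisfy a
  recursion in the length.\<close>

definition ext_weight :: "nat \<Rightarrow> nat list \<Rightarrow> nat" where
  "ext_weight u c = card (ext_pairs c) + head_run u c"

definition weight_count :: "nat \<Rightarrow> nat \<Rightarrow> nat \<Rightarrow> nat" where
  "weight_count m u k = card {c \<in> cutoff_seqs m. u < c ! 0 \<and> ext_weight u c = k}"

lemma cutoff_seqsD:
  assumes "c \<in> cutoff_seqs m"
  shows "length c = m" "sorted c" "i < m \<Longrightarrow> min (i + 2) m \<le> c ! i" "i < m \<Longrightarrow> c ! i \<le> m"
  using assms unfolding cutoff_seqs_def by auto

lemma cutoff_seqs_mono: "c \<in> cutoff_seqs m \<Longrightarrow> i \<le> j \<Longrightarrow> j < m \<Longrightarrow> c ! i \<le> c ! j"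
  using cutoff_seqsD(1,2) sorted_nth_mono by blast

lemma finite_cutoff_seqs: "finite (cutoff_seqs m)"
proof (rule finite_subset)
  show "cutoff_seqs m \<subseteq> {xs. set xs \<subseteq> {0..m} \<and> length xs = m}"
    unfolding cutoff_seqs_def by (auto simp: in_set_conv_nth)
qed (simp add: finite_lists_length_eq)

lemma Cons_map_Suc_in_cutoff_seqs_iff:
  assumes "1 \<le> m"
  shows "x # map Suc c \<in> cutoff_seqs (Suc m) \<longleftrightarrow> c \<in> cutoff_seqs m \<and> 2 \<le> x \<and> x \<le> Suc (c ! 0)"
proof (cases "length c = m \<and> sorted c")
  case True
  have "(\<forall>y\<in>set c. x \<le> Suc y) \<longleftrightarrow> x \<le> Suc (c ! 0)"
  proof
    assume "\<forall>y\<in>set c. x \<le> Suc y"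
    then show "x \<le> Suc (c ! 0)" using True assms nth_mem[of 0 c] by auto
  next
    assume "x \<le> Suc (c ! 0)"
    then show "\<forall>y\<in>set c. x \<le> Suc y"
      using True sorted_nth_mono[of c 0] by (fastforce simp: in_set_conv_nth)
  qed
  moreover have "x \<le> Suc m" if "x \<le> Suc (c ! 0)" "\<forall>i<m. min (i + 2) m \<le> c ! i \<and> c ! i \<le> m"
    using that assms by force
  ultimately show ?thesis
    using True assms unfolding cutoff_seqs_def by (auto simp: All_less_Suc2 sorted_map)
next
  case False
  then show ?thesis unfolding cutoff_seqs_def by (auto simp: sorted_map)
qed

lemma cutoff_seqs_Suc:
  assumes "1 \<le> m"
  shows "cutoff_seqs (Suc m) = (\<lambda>(c, x). x # map Suc c) ` (SIGMA c:cutoff_seqs m. {2..Suc (c ! 0)})"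
proof
  show "cutoff_seqs (Suc m) \<subseteq> (\<lambda>(c, x). x # map Suc c) ` (SIGMA c:cutoff_seqs m. {2..Suc (c ! 0)})"
  proof
    fix c assume c: "c \<in> cutoff_seqs (Suc m)"
    then obtain x r where xr: "c = x # r" using cutoff_seqsD(1)[OF c] by (cases c) auto
    have pos: "0 < y" if y: "y \<in> set r" for y
    proof -
      obtain i where "i < length r" "r ! i = y" using y by (auto simp: in_set_conv_nth)
      then show ?thesis using cutoff_seqsD(1)[OF c] cutoff_seqsD(3)[OF c, of "Suc i"] xr by auto
    qed
    define r' where "r' = map (\<lambda>y. y - 1) r"
    have "map Suc r' = r"
      unfolding r'_def map_map using pos by (intro map_idI) simp
    then have c': "c = x # map Suc r'" using xr by simp
    then have "r' \<in> cutoff_seqs m" "x \<in> {2..Suc (r' ! 0)}"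
      using c Cons_map_Suc_in_cutoff_seqs_iff[OF assms] by auto
    then show "c \<in> (\<lambda>(c, x). x # map Suc c) ` (SIGMA c:cutoff_seqs m. {2..Suc (c ! 0)})"
      unfolding c' by force
  qed
qed (use Cons_map_Suc_in_cutoff_seqs_iff[OF assms] in auto)

lemma ext_pairs_Cons:
  "ext_pairs (x # map Suc c) = (\<lambda>(u, v). (Suc u, Suc v)) ` ext_pairs c \<union>
     (\<lambda>u. (Suc u, 0)) ` {u. u < length c \<and> Suc u < x \<and> x \<le> c ! u \<and> c ! u = c ! 0}"
  (is "?L = ?A \<union> ?B")
proof (rule Set.set_eqI)
  fix p :: "nat \<times> nat"
  obtain u v where p: "p = (u, v)" by force
  have "map Suc c ! 0 = Suc (c ! 0)" if "c \<noteq> []"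
    using that by simp
  then show "p \<in> ?L \<longleftrightarrow> p \<in> ?A \<union> ?B"
    unfolding p ext_pairs_def by (cases u; cases v; cases "c = []") (auto simp: nth_Cons')
qed

lemma card_ext_pairs_Cons:
  "card (ext_pairs (x # map Suc c)) =
     card (ext_pairs c) + (if x \<le> c ! 0 then head_run (x - 1) c else 0)"
proof -
  define Q where "Q = {u. u < length c \<and> Suc u < x \<and> x \<le> c ! u \<and> c ! u = c ! 0}"
  have "finite (ext_pairs c)"
    by (rule finite_subset[of _ "{..<length c} \<times> {..<length c}"]) (auto simp: ext_pairs_def)
  moreover have "inj_on (\<lambda>(u, v). (Suc u, Suc v)) (ext_pairs c)" "inj_on (\<lambda>u. (Suc u, 0::nat)) Q"
    by (auto simp: inj_on_def)
  ultimately have "card (ext_pairs (x # map Suc c)) = card (ext_pairs c) + card Q"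
    unfolding ext_pairs_Cons Q_def[symmetric]
    by (subst card_Un_disjoint) (auto simp: card_image Q_def)
  moreover have "Q = (if x \<le> c ! 0 then {i. i < x - 1 \<and> i < length c \<and> c ! i = c ! 0} else {})"
    unfolding Q_def by auto
  ultimately show ?thesis unfolding head_run_def by simp
qed

lemma head_run_0 [simp]: "head_run 0 c = 0"
  by (simp add: head_run_def)

lemma head_run_Cons:
  assumes "sorted c" "x \<le> c ! 0"
  shows "head_run u (x # map Suc c) = (if u = 0 then 0 else 1)"
proof -
  have "(x # map Suc c) ! i \<noteq> x" if "0 < i" "i < Suc (length c)" for i
    using that assms sorted_nth_mono[of c 0 "i - 1"] by (cases i) auto
  then have "{i. i < u \<and> i < length (x # map Suc c) \<and> (x # map Suc c) ! i = (x # map Suc c) ! 0} =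
      (if u = 0 then {} else {0})"
    by (auto simp del: nth_Cons_pos)
  then show ?thesis unfolding head_run_def by simp
qed

lemma head_run_Cons_merge:
  "head_run u (Suc (c ! 0) # map Suc c) = (if u = 0 then 0 else Suc (head_run (u - 1) c))"
proof (cases u)
  case (Suc u')
  have "{i. i < u \<and> i < length (Suc (c ! 0) # map Suc c) \<and> (Suc (c ! 0) # map Suc c) ! i = Suc (c ! 0)}
        = insert 0 (Suc ` {i. i < u' \<and> i < length c \<and> c ! i = c ! 0})"
  proof (rule Set.set_eqI)
    fix i show "i \<in> {i. i < u \<and> i < length (Suc (c ! 0) # map Suc c) \<and> (Suc (c ! 0) # map Suc c) ! i = Suc (c ! 0)}
        \<longleftrightarrow> i \<in> insert 0 (Suc ` {i. i < u' \<and> i < length c \<and> c ! i = c ! 0})"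
      using Suc by (cases i) auto
  qed
  then show ?thesis unfolding head_run_def using Suc by (simp add: card_image)
qed simp

lemma ext_weight_Cons:
  "sorted c \<Longrightarrow> x \<le> c ! 0 \<Longrightarrow> ext_weight u (x # map Suc c) = ext_weight (x - 1) c + (if u = 0 then 0 else 1)"
  unfolding ext_weight_def by (simp add: card_ext_pairs_Cons head_run_Cons)

lemma ext_weight_Cons_merge:
  "ext_weight u (Suc (c ! 0) # map Suc c) = ext_weight (u - 1) c + (if u = 0 then 0 else 1)"
  unfolding ext_weight_def by (simp add: card_ext_pairs_Cons head_run_Cons_merge)

text \<open>Removing the head x of a sequence \<^term>\<open>x # map Suc c\<close> either lowers the weight parameter
  to \<^term>\<open>x - 1\<close> or, if x merges with the next entry, to \<^term>\<open>u - 1\<close>.\<close>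

lemma card_heads_ext_weight:
  assumes c: "c \<in> cutoff_seqs m" "1 \<le> m" and k: "k = k' + (if u = 0 then 0 else 1)"
  shows "card {x \<in> {2..Suc (c ! 0)}. u < x \<and> ext_weight u (x # map Suc c) = k} =
    card {y \<in> {u - 1..<c ! 0}. ext_weight y c = k'}"
proof -
  define f where "f y = (if y = u - 1 then Suc (c ! 0) else Suc y)" for y
  have c0: "1 \<le> c ! 0" using cutoff_seqsD(3)[OF c(1), of 0] c(2) by auto
  have sorted: "sorted c" using cutoff_seqsD(2)[OF c(1)] .
  have "f ` {y \<in> {u - 1..<c ! 0}. ext_weight y c = k'} =
      {x \<in> {2..Suc (c ! 0)}. u < x \<and> ext_weight u (x # map Suc c) = k}"
  proof (intro equalityI subsetI)
    fix x assume "x \<in> f ` {y \<in> {u - 1..<c ! 0}. ext_weight y c = k'}"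
    then obtain y where y: "u - 1 \<le> y" "y < c ! 0" "ext_weight y c = k'" "x = f y" by auto
    show "x \<in> {x \<in> {2..Suc (c ! 0)}. u < x \<and> ext_weight u (x # map Suc c) = k}"
    proof (cases "y = u - 1")
      case True
      then show ?thesis using y c0 ext_weight_Cons_merge[of u c] k unfolding f_def by auto
    next
      case False
      then show ?thesis using y ext_weight_Cons[OF sorted, of "Suc y" u] k unfolding f_def by auto
    qed
  next
    fix x assume "x \<in> {x \<in> {2..Suc (c ! 0)}. u < x \<and> ext_weight u (x # map Suc c) = k}"
    then have x: "2 \<le> x" "x \<le> Suc (c ! 0)" "u < x" "ext_weight u (x # map Suc c) = k" by auto
    show "x \<in> f ` {y \<in> {u - 1..<c ! 0}. ext_weight y c = k'}"
    proof (cases "x = Suc (c ! 0)")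
      case True
      then have "ext_weight (u - 1) c = k'" "u - 1 < c ! 0"
        using ext_weight_Cons_merge[of u c] x k c0 by auto
      then show ?thesis using True unfolding f_def by (intro image_eqI[of _ _ "u - 1"]) auto
    next
      case False
      then have "ext_weight (x - 1) c = k'" "x - 1 \<noteq> u - 1"
        using ext_weight_Cons[OF sorted, of x u] x k by auto
      then show ?thesis using False x unfolding f_def by (intro image_eqI[of _ _ "x - 1"]) auto
    qed
  qed
  moreover have "inj_on f {..<c ! 0}"
    unfolding inj_on_def f_def by simp
  then have "inj_on f {y \<in> {u - 1..<c ! 0}. ext_weight y c = k'}"
    by (rule inj_on_subset) auto
  ultimately show ?thesis using card_image by fastforce
qed

lemma weight_count_Suc:
  assumes "1 \<le> m"
  shows "weight_count (Suc m) u (k + (if u = 0 then 0 else 1)) = (\<Sum>y\<in>{u - 1..<m}. weight_count m y k)"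
proof -
  define P where "P c \<longleftrightarrow> u < c ! 0 \<and> ext_weight u c = k + (if u = 0 then 0 else 1)" for c
  define X where "X c = {x \<in> {2..Suc (c ! 0)}. P (x # map Suc c)}" for c
  have "{c \<in> cutoff_seqs (Suc m). P c} = (\<lambda>(c, x). x # map Suc c) ` (SIGMA c:cutoff_seqs m. X c)"
    unfolding cutoff_seqs_Suc[OF assms] X_def by auto
  moreover have "inj_on (\<lambda>(c, x). x # map Suc c) (SIGMA c:cutoff_seqs m. X c)"
    by (auto simp: inj_on_def)
  ultimately have "weight_count (Suc m) u (k + (if u = 0 then 0 else 1)) = (\<Sum>c\<in>cutoff_seqs m. card (X c))"
    unfolding weight_count_def P_def[symmetric]
    by (simp add: card_image card_SigmaI finite_cutoff_seqs X_def)
  also have "\<dots> = (\<Sum>c\<in>cutoff_seqs m. \<Sum>y\<in>{u - 1..<m}. if y < c ! 0 \<and> ext_weight y c = k then 1 else 0)"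
  proof (rule sum.cong[OF refl])
    fix c assume c: "c \<in> cutoff_seqs m"
    have "c ! 0 \<le> m" using cutoff_seqsD(4)[OF c, of 0] assms by simp
    then have "{y \<in> {u - 1..<c ! 0}. ext_weight y c = k} = {y \<in> {u - 1..<m}. y < c ! 0 \<and> ext_weight y c = k}"
      by auto
    then show "card (X c) = (\<Sum>y\<in>{u - 1..<m}. if y < c ! 0 \<and> ext_weight y c = k then 1 else 0)"
      unfolding X_def P_def using card_heads_ext_weight[OF c assms refl] by (simp add: sum.inter_filter[symmetric])
  qed
  also have "\<dots> = (\<Sum>y\<in>{u - 1..<m}. weight_count m y k)"
    unfolding weight_count_def by (subst sum.swap) (simp add: finite_cutoff_seqs sum.inter_filter[symmetric])
  finally show ?thesis .
qed

lemma weight_count_0: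
  assumes "1 \<le> u" "1 \<le> m"
  shows "weight_count m u 0 = 0"
proof -
  have "head_run u c \<noteq> 0" if "c \<in> cutoff_seqs m" for c
    using assms cutoff_seqsD(1)[OF that] unfolding head_run_def by (subst card_0_eq) (auto intro!: exI[of _ 0])
  then have "{c \<in> cutoff_seqs m. u < c ! 0 \<and> ext_weight u c = 0} = {}"
    unfolding ext_weight_def by blast
  then show ?thesis unfolding weight_count_def by (metis card.empty)
qed

lemma cutoff_seqs_2: "cutoff_seqs 2 = {[2, 2]}"
proof -
  have "c = [2, 2]" if c: "c \<in> cutoff_seqs 2" for c
  proof -
    obtain a b where "c = [a, b]"
      using cutoff_seqsD(1)[OF c] by (auto simp: length_Suc_conv numeral_2_eq_2)
    then show ?thesis using cutoff_seqsD(3,4)[OF c, of 0] cutoff_seqsD(3,4)[OF c, of 1] by auto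
  qed
  moreover have "[2, 2] \<in> cutoff_seqs 2"
    unfolding cutoff_seqs_def by (auto simp: less_2_cases_iff)
  ultimately show ?thesis by blast
qed

lemma weight_count_2: "weight_count 2 u k = (if u \<le> k \<and> k < 2 then ballot 0 (k - u) else 0)"
proof -
  have "ext_pairs [2, 2] = {}"
    unfolding ext_pairs_def by (auto simp: less_2_cases_iff)
  moreover have "{i. i < u \<and> i < length [2::nat, 2] \<and> [2::nat, 2] ! i = [2::nat, 2] ! 0} = {..<min u 2}"
    by (auto simp: less_2_cases_iff)
  ultimately have "ext_weight u [2, 2] = min u 2"
    unfolding ext_weight_def head_run_def by simp
  then have "{c \<in> cutoff_seqs 2. u < c ! 0 \<and> ext_weight u c = k} = (if u < 2 \<and> k = u then {[2, 2]} else {})"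
    unfolding cutoff_seqs_2 by auto
  then show ?thesis
    unfolding weight_count_def by auto
qed

lemma sum_ballot_reverse:
  "(\<Sum>y = a..<p + 2. if y \<le> k \<and> k < p + 2 then ballot p (k - y) else 0) =
    (if a \<le> k \<and> k < p + 2 then ballot (Suc p) (k - a) else 0)"
proof (cases "a \<le> k \<and> k < p + 2")
  case True
  have "(\<Sum>y = a..<p + 2. if y \<le> k \<and> k < p + 2 then ballot p (k - y) else 0) =
      (\<Sum>y = a..<p + 2. if y \<le> k then ballot p (k - y) else 0)"
    using True by (intro sum.cong refl) simp
  also have "\<dots> = (\<Sum>y\<in>{y \<in> {a..<p + 2}. y \<le> k}. ballot p (k - y))"
    by (rule sum.inter_filter[symmetric]) simp
  also have "{y \<in> {a..<p + 2}. y \<le> k} = {a..k}"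
    using True by auto
  also have "(\<Sum>y = a..k. ballot p (k - y)) = (\<Sum>i\<le>k - a. ballot p i)"
    by (rule sum.reindex_bij_witness[of _ "\<lambda>i. k - i" "\<lambda>y. k - y"]) (use True in auto)
  also have "\<dots> = ballot (Suc p) (k - a)"
    using True by (simp add: le_diff_conv)
  finally show ?thesis using True by simp
next
  case False
  then show ?thesis by (subst sum.neutral) auto
qed

lemma weight_count_eq_ballot:
  "weight_count (p + 2) u k = (if u \<le> k \<and> k < p + 2 then ballot p (k - u) else 0)"
proof (induction p arbitrary: u k)
  case 0
  show ?case unfolding add_0 by (rule weight_count_2)
next
  case (Suc p)
  show ?case
  proof (cases "u = 0 \<or> 1 \<le> k")
    case True
    define k' where "k' = k - (if u = 0 then 0 else 1)"
    have k: "k = k' + (if u = 0 then 0 else 1)" unfolding k'_def using True by auto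
    have "weight_count (Suc p + 2) u k = (\<Sum>y = u - 1..<p + 2. weight_count (p + 2) y k')"
      unfolding k using weight_count_Suc[of "p + 2"] by simp
    also have "\<dots> = (\<Sum>y = u - 1..<p + 2. if y \<le> k' \<and> k' < p + 2 then ballot p (k' - y) else 0)"
      using Suc.IH by simp
    also have "\<dots> = (if u - 1 \<le> k' \<and> k' < p + 2 then ballot (Suc p) (k' - (u - 1)) else 0)"
      by (rule sum_ballot_reverse)
    also have "\<dots> = (if u \<le> k \<and> k < Suc p + 2 then ballot (Suc p) (k - u) else 0)"
      using k ballot_eq_0[of "Suc p" "p + 2"] by auto
    finally show ?thesis .
  next
    case False
    then have "k = 0" "1 \<le> u" by auto
    then show ?thesis using weight_count_0[of u "Suc p + 2"] by simp
  qed
qed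

lemma card_cutoff_seqs_ext_pairs:
  assumes "k \<le> n"
  shows "card {c \<in> cutoff_seqs (n + 2). card (ext_pairs c) = k} = ballot n k"
proof -
  have "0 < c ! 0" if "c \<in> cutoff_seqs (n + 2)" for c
    using cutoff_seqsD(3)[OF that, of 0] by simp
  then have "{c \<in> cutoff_seqs (n + 2). card (ext_pairs c) = k} = {c \<in> cutoff_seqs (n + 2). 0 < c ! 0 \<and> ext_weight 0 c = k}"
    unfolding ext_weight_def by auto
  then show ?thesis
    using weight_count_eq_ballot[of n 0 k] assms unfolding weight_count_def by simp
qed

section \<open>Ext^1 of the radical of a linear Nakayama algebra\<close>

lemma index_mult_mat_sum:
  assumes "A \<in> carrier_mat a b" "B \<in> carrier_mat b c" "i < a" "j < c"
  shows "(A * B) $$ (i, j) = (\<Sum>k<b. A $$ (i, k) * B $$ (k, j))"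
  using assms by (auto simp: scalar_prod_def atLeast0LessThan intro!: sum.cong)

lemma the_nth_index: "distinct xs \<Longrightarrow> r < length xs \<Longrightarrow> (THE i. i < length xs \<and> xs ! i = xs ! r) = r"
  by (rule the_equality) (auto simp: nth_eq_iff_index_eq)

lemma sum_nth_distinct_delta:
  assumes "distinct xs"
  shows "(\<Sum>r<length xs. if xs ! r = a then f r else 0) =
    (if a \<in> set xs then f (THE r. r < length xs \<and> xs ! r = a) else (0::'a::comm_monoid_add))"
proof (cases "a \<in> set xs")
  case True
  then obtain r0 where r0: "r0 < length xs" "xs ! r0 = a" by (auto simp: in_set_conv_nth)
  then have "(\<Sum>r<length xs. if xs ! r = a then f r else 0) = (\<Sum>r<length xs. if r = r0 then f r else 0)"
    using assms by (intro sum.cong refl) (auto simp: nth_eq_iff_index_eq)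
  then show ?thesis using True r0 the_nth_index[OF assms r0(1)] by simp
next
  case False
  then show ?thesis by (auto intro!: sum.neutral)
qed

lemma pmap_carrier:
  "(\<And>j. f j \<in> carrier_mat (d (Suc j)) (d j)) \<Longrightarrow> pmap d f i l \<in> carrier_mat (d (i + l)) (d i)"
  by (induction l) (auto intro: mult_carrier_mat)

lemma four_block_mat_eq_0_iff:
  assumes "B \<in> carrier_mat a d"
  shows "four_block_mat (0\<^sub>m a c) B (0\<^sub>m b c) (0\<^sub>m b d) = 0\<^sub>m (a + b) (c + d) \<longleftrightarrow> B = 0\<^sub>m a d"
proof
  assume zero: "four_block_mat (0\<^sub>m a c) B (0\<^sub>m b c) (0\<^sub>m b d) = 0\<^sub>m (a + b) (c + d)"
  show "B = 0\<^sub>m a d"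
  proof (rule eq_matI)
    fix r s assume "r < dim_row (0\<^sub>m a d :: 'a mat)" "s < dim_col (0\<^sub>m a d :: 'a mat)"
    then show "B $$ (r, s) = 0\<^sub>m a d $$ (r, s)"
      using arg_cong[OF zero, of "\<lambda>M. M $$ (r, s + c)"] assms by simp
  qed (use assms in auto)
qed (use assms in simp)

locale lin_nakayama =
  fixes m :: nat and I :: "(nat \<times> nat) set"
  assumes ideal: "lin_nak_ideal m I"
begin

lemma ideal_bounds: "(i, j) \<in> I \<Longrightarrow> i + 2 \<le> j \<and> j < m"
  using ideal unfolding lin_nak_ideal_def by auto

lemma ideal_extend: "(i, j) \<in> I \<Longrightarrow> i' \<le> i \<Longrightarrow> j \<le> j' \<Longrightarrow> j' < m \<Longrightarrow> (i', j') \<in> I"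
  using ideal unfolding lin_nak_ideal_def by blast

definition cutoff :: "nat \<Rightarrow> nat" where
  "cutoff i = (LEAST j. j = m \<or> (i, j) \<in> I)"

lemma cutoff_le: "cutoff i \<le> m"
  unfolding cutoff_def by (rule Least_le) simp

lemma cutoff_in_ideal: "cutoff i < m \<Longrightarrow> (i, cutoff i) \<in> I"
  using LeastI[of "\<lambda>j. j = m \<or> (i, j) \<in> I" m] unfolding cutoff_def by auto

lemma in_ideal_iff: "j < m \<Longrightarrow> (i, j) \<in> I \<longleftrightarrow> cutoff i \<le> j"
  using cutoff_in_ideal ideal_extend[of i "cutoff i" i j] cutoff_def Least_le[of "\<lambda>j. j = m \<or> (i, j) \<in> I" j]
  by fastforce

lemma cutoff_ge: "cutoff i < m \<Longrightarrow> i + 2 \<le> cutoff i"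
  using cutoff_in_ideal ideal_bounds by blast

lemma cutoff_mono: "i \<le> i' \<Longrightarrow> cutoff i \<le> cutoff i'"
  using cutoff_le[of i] cutoff_in_ideal[of i'] ideal_extend[of i' "cutoff i'" i "cutoff i'"] in_ideal_iff[of "cutoff i'" i]
  by (cases "cutoff i' < m") auto

definition jsupp :: "nat \<Rightarrow> nat set" where
  "jsupp j = set (jbasis I j)"

lemma mem_jsupp: "j < m \<Longrightarrow> x \<in> jsupp j \<longleftrightarrow> x < j \<and> j < cutoff x"
  unfolding jsupp_def jbasis_def using in_ideal_iff by auto

definition jsrc :: "nat \<Rightarrow> nat \<Rightarrow> nat" where
  "jsrc j r = jbasis I j ! r"

definition jpos :: "nat \<Rightarrow> nat \<Rightarrow> nat" where
  "jpos j x = (THE r. r < jdim I j \<and> jsrc j r = x)"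

lemma distinct_jbasis: "distinct (jbasis I j)"
  unfolding jbasis_def by simp

lemma jsrc_in_jsupp: "r < jdim I j \<Longrightarrow> jsrc j r \<in> jsupp j"
  unfolding jsrc_def jsupp_def jdim_def by simp

lemma jpos_jsrc [simp]: "r < jdim I j \<Longrightarrow> jpos j (jsrc j r) = r"
  unfolding jpos_def jsrc_def jdim_def using the_nth_index[OF distinct_jbasis] by simp

lemma jsupp_obtain_jsrc:
  assumes "x \<in> jsupp j"
  obtains r where "r < jdim I j" "jsrc j r = x"
  using assms unfolding jsupp_def jsrc_def jdim_def by (auto simp: in_set_conv_nth)

lemma jpos_less: "x \<in> jsupp j \<Longrightarrow> jpos j x < jdim I j"
  by (metis jpos_jsrc jsupp_obtain_jsrc)

lemma jsrc_jpos [simp]: "x \<in> jsupp j \<Longrightarrow> jsrc j (jpos j x) = x"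
  by (metis jpos_jsrc jsupp_obtain_jsrc)

lemma jsrc_inj: "r < jdim I j \<Longrightarrow> r' < jdim I j \<Longrightarrow> jsrc j r = jsrc j r' \<Longrightarrow> r = r'"
  by (metis jpos_jsrc)

lemma jpos_inj: "x \<in> jsupp j \<Longrightarrow> y \<in> jsupp j \<Longrightarrow> jpos j x = jpos j y \<Longrightarrow> x = y"
  by (metis jsrc_jpos)

lemma jdim_le: "jdim I j \<le> j"
  unfolding jdim_def jbasis_def by (metis length_filter_le length_upt minus_nat.diff_0)

lemma jmap_carrier: "jmap I j \<in> carrier_mat (jdim I (Suc j)) (jdim I j)"
  unfolding jmap_def by simp

lemma jmap_entry:
  "r < jdim I (Suc j) \<Longrightarrow> s < jdim I j \<Longrightarrow> jmap I j $$ (r, s) = (if jsrc j s = jsrc (Suc j) r then 1 else 0)"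
  unfolding jmap_def jsrc_def by auto

lemma jmap_entry':
  "r < jdim I (Suc j) \<Longrightarrow> s < jdim I j \<Longrightarrow> jmap I j $$ (r, s) = (if jsrc (Suc j) r = jsrc j s then 1 else 0)"
  unfolding jmap_def jsrc_def by auto

text \<open>jmap and the path maps are 0/1 matrices matching basis paths with the same start point, so
  multiplying with them just relabels rows or columns.\<close>

lemma selection_mult_entry:
  fixes A B :: "'a::field mat"
  assumes "A \<in> carrier_mat a (jdim I j)" "B \<in> carrier_mat (jdim I j) b" "r < a" "s < b"
    and "\<And>k. k < jdim I j \<Longrightarrow> A $$ (r, k) = (if jsrc j k = x then 1 else 0)"
  shows "(A * B) $$ (r, s) = (if x \<in> jsupp j then B $$ (jpos j x, s) else 0)"
proof -
  have "(A * B) $$ (r, s) = (\<Sum>k<jdim I j. if jsrc j k = x then B $$ (k, s) else 0)"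
    unfolding index_mult_mat_sum[OF assms(1-4)] using assms(5) by (intro sum.cong refl) simp
  also have "\<dots> = (if x \<in> jsupp j then B $$ (jpos j x, s) else 0)"
    using sum_nth_distinct_delta[OF distinct_jbasis, of j x] unfolding jpos_def jsrc_def jdim_def jsupp_def .
  finally show ?thesis .
qed

lemma mult_selection_entry:
  fixes A B :: "'a::field mat"
  assumes "A \<in> carrier_mat a (jdim I j)" "B \<in> carrier_mat (jdim I j) b" "r < a" "s < b"
    and "\<And>k. k < jdim I j \<Longrightarrow> B $$ (k, s) = (if jsrc j k = x then 1 else 0)"
  shows "(A * B) $$ (r, s) = (if x \<in> jsupp j then A $$ (r, jpos j x) else 0)"
proof -
  have "(A * B) $$ (r, s) = (\<Sum>k<jdim I j. if jsrc j k = x then A $$ (r, k) else 0)"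
    unfolding index_mult_mat_sum[OF assms(1-4)] using assms(5) by (intro sum.cong refl) simp
  also have "\<dots> = (if x \<in> jsupp j then A $$ (r, jpos j x) else 0)"
    using sum_nth_distinct_delta[OF distinct_jbasis, of j x] unfolding jpos_def jsrc_def jdim_def jsupp_def .
  finally show ?thesis .
qed

abbreviation jpath :: "nat \<Rightarrow> nat \<Rightarrow> 'k::field mat" where
  "jpath i l \<equiv> pmap (jdim I) (jmap I) i l"

lemma jpath_carrier: "jpath i l \<in> carrier_mat (jdim I (i + l)) (jdim I i)"
  using pmap_carrier jmap_carrier by blast

lemma jpath_entry:
  assumes "i + l < m" "r < jdim I (i + l)" "s < jdim I i"
  shows "(jpath i l :: 'k::field mat) $$ (r, s) = (if jsrc (i + l) r = jsrc i s then 1 else 0)"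
  using assms
proof (induction l arbitrary: r)
  case 0
  then show ?case using jsrc_inj[of r i s] by auto
next
  case (Suc l)
  let ?x = "jsrc (Suc (i + l)) r"
  have r: "r < jdim I (Suc (i + l))" using Suc.prems by simp
  have x: "?x \<in> jsupp (Suc (i + l))" using r by (rule jsrc_in_jsupp)
  have "(jpath i (Suc l) :: 'k mat) $$ (r, s) = (jmap I (i + l) * jpath i l) $$ (r, s)"
    by simp
  also have "\<dots> = (if ?x \<in> jsupp (i + l) then jpath i l $$ (jpos (i + l) ?x, s) else 0)"
    by (rule selection_mult_entry[OF jmap_carrier jpath_carrier r Suc.prems(3) jmap_entry[OF r]])
  also have "\<dots> = (if ?x = jsrc i s then 1 else 0)"
  proof -
    have "?x \<in> jsupp (i + l)" if "?x = jsrc i s"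
      using x that jsrc_in_jsupp[OF Suc.prems(3)] mem_jsupp[of i] mem_jsupp[of "i + l"] mem_jsupp[of "Suc (i + l)"]
        Suc.prems(1) by auto
    moreover have "(jpath i l :: 'k mat) $$ (jpos (i + l) ?x, s) = (if ?x = jsrc i s then 1 else 0)"
      if "?x \<in> jsupp (i + l)"
    proof -
      have "i + l < m" using Suc.prems(1) by simp
      from Suc.IH[OF this jpos_less[OF that] Suc.prems(3)] show ?thesis unfolding jsrc_jpos[OF that] .
    qed
    ultimately show ?thesis by auto
  qed
  finally show ?case by (simp only: add_Suc_right)
qed

lemma jpath_relation:
  assumes "(i, j) \<in> I"
  shows "jpath i (j - i) = 0\<^sub>m (jdim I j) (jdim I i)"
proof -
  have ij: "i + (j - i) = j" "j < m" using ideal_bounds[OF assms] by auto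
  have "jsrc j r \<noteq> jsrc i s" if "r < jdim I j" "s < jdim I i" for r s
  proof
    assume eq: "jsrc j r = jsrc i s"
    have "jsrc i s < i" using jsrc_in_jsupp[OF that(2)] mem_jsupp ij by auto
    moreover have "j < cutoff (jsrc j r)" using jsrc_in_jsupp[OF that(1)] mem_jsupp ij by auto
    moreover have "cutoff i \<le> j" using assms in_ideal_iff ij by auto
    ultimately show False using eq cutoff_mono[of "jsrc i s" i] by auto
  qed
  then show ?thesis
    using jpath_carrier[of i "j - i"] jpath_entry[of i "j - i"] ij by (auto intro!: eq_matI)
qed

abbreviation hmatJ :: "(nat \<Rightarrow> nat \<Rightarrow> nat \<Rightarrow> 'k::field) \<Rightarrow> nat \<Rightarrow> 'k mat" where
  "hmatJ hc \<equiv> hmat (jdim I) (jdim I) hc"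

lemma hmatJ_carrier: "hmatJ hc j \<in> carrier_mat (jdim I (Suc j)) (jdim I j)"
  unfolding hmat_def by simp

text \<open>The structure maps of the extension of J by J given by hc, and the upper right block of its
  path maps.\<close>

definition ext_map :: "(nat \<Rightarrow> nat \<Rightarrow> nat \<Rightarrow> 'k::field) \<Rightarrow> nat \<Rightarrow> 'k mat" where
  "ext_map hc j = four_block_mat (jmap I j) (hmatJ hc j) (0\<^sub>m (jdim I (Suc j)) (jdim I j)) (jmap I j)"

fun ext_corner :: "(nat \<Rightarrow> nat \<Rightarrow> nat \<Rightarrow> 'k::field) \<Rightarrow> nat \<Rightarrow> nat \<Rightarrow> 'k mat" where
  "ext_corner hc i 0 = 0\<^sub>m (jdim I i) (jdim I i)"
| "ext_corner hc i (Suc l) = jmap I (i + l) * ext_corner hc i l + hmatJ hc (i + l) * jpath i l"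

lemma ext_corner_carrier: "ext_corner hc i l \<in> carrier_mat (jdim I (i + l)) (jdim I i)"
  by (induction l) (auto intro!: mult_carrier_mat add_carrier_mat jmap_carrier hmatJ_carrier jpath_carrier)

lemma pmap_ext_map:
  fixes hc :: "nat \<Rightarrow> nat \<Rightarrow> nat \<Rightarrow> 'k::field"
  shows "pmap (\<lambda>j. jdim I j + jdim I j) (ext_map hc) i l =
   four_block_mat (jpath i l) (ext_corner hc i l) (0\<^sub>m (jdim I (i + l)) (jdim I i)) (jpath i l)"
proof (induction l)
  case (Suc l)
  let ?d = "jdim I (i + l)" and ?d' = "jdim I (Suc (i + l))"
  have "pmap (\<lambda>j. jdim I j + jdim I j) (ext_map hc) i (Suc l) =
    four_block_mat (jmap I (i + l)) (hmatJ hc (i + l)) (0\<^sub>m ?d' ?d) (jmap I (i + l)) *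
    four_block_mat (jpath i l) (ext_corner hc i l) (0\<^sub>m ?d (jdim I i)) (jpath i l)"
    by (simp add: Suc ext_map_def)
  also have "\<dots> = four_block_mat (jpath i (Suc l)) (ext_corner hc i (Suc l)) (0\<^sub>m ?d' (jdim I i)) (jpath i (Suc l))"
  proof -
    have c: "(jmap I (i + l) :: 'k mat) \<in> carrier_mat ?d' ?d" "hmatJ hc (i + l) \<in> carrier_mat ?d' ?d"
      "(jpath i l :: 'k mat) \<in> carrier_mat ?d (jdim I i)" "ext_corner hc i l \<in> carrier_mat ?d (jdim I i)"
      "(jmap I (i + l) * jpath i l :: 'k mat) \<in> carrier_mat ?d' (jdim I i)"
      using jpath_carrier by (auto intro!: mult_carrier_mat jmap_carrier hmatJ_carrier ext_corner_carrier)
    show ?thesis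
      unfolding mult_four_block_mat[OF c(1,2) zero_carrier_mat c(1,3,4) zero_carrier_mat c(3)]
      using c by (simp add: right_mult_zero_mat left_mult_zero_mat)
  qed
  finally show ?case by simp
qed simp

text \<open>hcoeff hc t u v is the coefficient of hc t between the basis path of J e_t starting at v
  and that of J e_(t+1) starting at u, and 0 if one of these paths does not exist.\<close>

definition hcoeff :: "(nat \<Rightarrow> nat \<Rightarrow> nat \<Rightarrow> 'k::field) \<Rightarrow> nat \<Rightarrow> nat \<Rightarrow> nat \<Rightarrow> 'k" where
  "hcoeff hc t u v =
     (if Suc t < m \<and> u \<in> jsupp (Suc t) \<and> v \<in> jsupp t then hc t (jpos (Suc t) u) (jpos t v) else 0)"

lemma hcoeff_nonzero:
  assumes "hcoeff hc t u v \<noteq> 0"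
  shows "Suc t < m \<and> u \<le> t \<and> v < t \<and> t < cutoff v \<and> Suc t < cutoff u"
  using assms mem_jsupp[of "Suc t" u] mem_jsupp[of t v] unfolding hcoeff_def by (auto split: if_splits)

lemma ext_corner_entry:
  fixes hc :: "nat \<Rightarrow> nat \<Rightarrow> nat \<Rightarrow> 'k::field"
  assumes "i + l < m" "r < jdim I (i + l)" "s < jdim I i"
  shows "ext_corner hc i l $$ (r, s) = (\<Sum>t<l. hcoeff hc (i + t) (jsrc (i + l) r) (jsrc i s))"
  using assms
proof (induction l arbitrary: r)
  case (Suc l)
  let ?u = "jsrc (Suc (i + l)) r" and ?v = "jsrc i s"
  have r: "r < jdim I (Suc (i + l))" and il: "i + l < m" using Suc.prems by simp_all
  note first = selection_mult_entry[OF jmap_carrier ext_corner_carrier[of hc] r Suc.prems(3) jmap_entry[OF r]]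
  have u: "?u \<in> jsupp (Suc (i + l))" "?u < Suc (i + l)" "Suc (i + l) < cutoff ?u"
    using Suc.prems mem_jsupp[of "Suc (i + l)"] jsrc_in_jsupp[of r "Suc (i + l)"] by auto
  have v: "?v \<in> jsupp i" using Suc.prems jsrc_in_jsupp by simp
  have "(jmap I (i + l) * ext_corner hc i l) $$ (r, s) = (\<Sum>t<l. hcoeff hc (i + t) ?u ?v)"
  proof (cases "?u \<in> jsupp (i + l)")
    case True
    then show ?thesis
      using Suc.IH[OF il jpos_less[OF True] Suc.prems(3)] by (simp add: first)
  next
    case False
    then have "?u = i + l" using u mem_jsupp[of "i + l" ?u] Suc.prems by auto
    then have "hcoeff hc (i + t) ?u ?v = 0" if "t < l" for t
      using that hcoeff_nonzero by fastforce
    then show ?thesis using False by (simp add: first)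
  qed
  moreover have "(hmatJ hc (i + l) * jpath i l) $$ (r, s) = hcoeff hc (i + l) ?u ?v"
    using mult_selection_entry[OF hmatJ_carrier[of hc] jpath_carrier r Suc.prems(3) jpath_entry[OF il _ Suc.prems(3)]]
      Suc.prems u(1) v jpos_less
    by (simp add: hcoeff_def hmat_def)
  moreover have "ext_corner hc i (Suc l) $$ (r, s) =
      (jmap I (i + l) * ext_corner hc i l) $$ (r, s) + (hmatJ hc (i + l) * jpath i l) $$ (r, s)"
  proof -
    have "hmatJ hc (i + l) * (jpath i l :: 'k mat) \<in> carrier_mat (jdim I (Suc (i + l))) (jdim I i)"
      by (rule mult_carrier_mat[OF hmatJ_carrier jpath_carrier])
    then have "dim_row (hmatJ hc (i + l) * (jpath i l :: 'k mat)) = jdim I (Suc (i + l))"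
      "dim_col (hmatJ hc (i + l) * (jpath i l :: 'k mat)) = jdim I i"
      by auto
    then show ?thesis using Suc.prems by (simp add: index_add_mat)
  qed
  ultimately show ?case by simp
qed simp

lemma pmap_ext_map_relation_iff:
  fixes hc :: "nat \<Rightarrow> nat \<Rightarrow> nat \<Rightarrow> 'k::field"
  assumes "(i, j) \<in> I"
  shows "pmap (\<lambda>j. jdim I j + jdim I j) (ext_map hc) i (j - i) = 0\<^sub>m (jdim I j + jdim I j) (jdim I i + jdim I i)
    \<longleftrightarrow> (\<forall>u\<in>jsupp j. \<forall>v\<in>jsupp i. (\<Sum>t = i..<j. hcoeff hc t u v) = 0)"
proof -
  have ij: "i + (j - i) = j" "j < m" using ideal_bounds[OF assms] by auto
  have X: "ext_corner hc i (j - i) \<in> carrier_mat (jdim I j) (jdim I i)"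
    using ext_corner_carrier[of hc i "j - i"] ij by simp
  have entry: "ext_corner hc i (j - i) $$ (r, s) = (\<Sum>t = i..<j. hcoeff hc t (jsrc j r) (jsrc i s))"
    if "r < jdim I j" "s < jdim I i" for r s
    using ext_corner_entry[of i "j - i" r s hc] that ij by (simp add: sum.atLeastLessThan_shift_0 atLeast0LessThan)
  have "pmap (\<lambda>j. jdim I j + jdim I j) (ext_map hc) i (j - i) = 0\<^sub>m (jdim I j + jdim I j) (jdim I i + jdim I i)
    \<longleftrightarrow> ext_corner hc i (j - i) = 0\<^sub>m (jdim I j) (jdim I i)"
    unfolding pmap_ext_map jpath_relation[OF assms] ij(1) by (rule four_block_mat_eq_0_iff[OF X])
  also have "\<dots> \<longleftrightarrow> (\<forall>r<jdim I j. \<forall>s<jdim I i. (\<Sum>t = i..<j. hcoeff hc t (jsrc j r) (jsrc i s)) = 0)"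
    using X entry by (auto intro!: eq_matI)
  also have "\<dots> \<longleftrightarrow> (\<forall>u\<in>jsupp j. \<forall>v\<in>jsupp i. (\<Sum>t = i..<j. hcoeff hc t u v) = 0)"
    by (metis jpos_less jsrc_in_jsupp jsrc_jpos)
  finally show ?thesis .
qed

lemma ext_cocycles_iff_relations:
  "hc \<in> ext_cocycles m I (jdim I) (jmap I) (jdim I) (jmap I) \<longleftrightarrow> hsupp m (jdim I) (jdim I) hc \<and>
     (\<forall>(i, j)\<in>I. \<forall>u\<in>jsupp j. \<forall>v\<in>jsupp i. (\<Sum>t = i..<j. hcoeff hc t u v) = 0)"
proof -
  have "ext_map hc j \<in> carrier_mat (jdim I (Suc j) + jdim I (Suc j)) (jdim I j + jdim I j)" for j
    unfolding ext_map_def by (auto intro!: four_block_carrier_mat jmap_carrier hmatJ_carrier)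
  then have "is_rep m I (\<lambda>j. jdim I j + jdim I j) (ext_map hc) \<longleftrightarrow>
      (\<forall>(i, j)\<in>I. \<forall>u\<in>jsupp j. \<forall>v\<in>jsupp i. (\<Sum>t = i..<j. hcoeff hc t u v) = 0)"
    unfolding is_rep_def
    by (simp, intro ball_cong refl) (auto simp: pmap_ext_map_relation_iff split: prod.splits)
  then show ?thesis
    unfolding ext_cocycles_def ext_map_def[abs_def] by simp
qed

definition coeff_sum :: "(nat \<Rightarrow> nat \<Rightarrow> nat \<Rightarrow> 'k::field) \<Rightarrow> nat \<times> nat \<Rightarrow> 'k" where
  "coeff_sum hc p = (\<Sum>t<cutoff (snd p). hcoeff hc t (fst p) (snd p))"

definition cob_pairs :: "(nat \<times> nat) set" where
  "cob_pairs = {(u, v). v < u \<and> u < cutoff v \<and> cutoff v < cutoff u}"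

definition rel_pairs :: "(nat \<times> nat) set" where
  "rel_pairs = {(u, v) \<in> cob_pairs. \<exists>i j. (i, j) \<in> I \<and> u \<in> jsupp j \<and> v \<in> jsupp i}"

lemma cob_pairs_bounds: "(u, v) \<in> cob_pairs \<Longrightarrow> v < u \<and> Suc u < m"
  unfolding cob_pairs_def using cutoff_le[of u] by auto

lemma finite_cob_pairs: "finite cob_pairs"
proof (rule finite_subset)
  show "cob_pairs \<subseteq> {..<m} \<times> {..<m}"
    using cob_pairs_bounds by fastforce
qed simp

lemma relation_witness_bounds:
  assumes "(i, j) \<in> I" "u \<in> jsupp j" "v \<in> jsupp i"
  shows "v < i \<and> i < cutoff v \<and> cutoff v \<le> j \<and> i \<le> u \<and> u < j \<and> j < cutoff u \<and> j < m"
proof -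
  have ij: "i < m" "j < m" "cutoff i \<le> j" using ideal_bounds[OF assms(1)] in_ideal_iff assms(1) by auto
  have "u < j" "j < cutoff u" "v < i" "i < cutoff v"
    using assms(2,3) mem_jsupp[OF ij(2)] mem_jsupp[OF ij(1)] by auto
  moreover have "i \<le> u" using ij \<open>j < cutoff u\<close> cutoff_mono[of u i] by (cases "i \<le> u") auto
  moreover have "cutoff v \<le> j" using ij \<open>v < i\<close> cutoff_mono[of v i] by auto
  ultimately show ?thesis using ij by auto
qed

lemma sum_hcoeff_relation:
  assumes "(i, j) \<in> I" "u \<in> jsupp j" "v \<in> jsupp i"
  shows "(\<Sum>t = i..<j. hcoeff hc t u v) = coeff_sum hc (u, v)"
proof -
  note bounds = relation_witness_bounds[OF assms]
  have zero: "hcoeff hc t u v = 0" if "t < i \<or> cutoff v \<le> t" for t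
    using that hcoeff_nonzero[of hc t u v] bounds by (cases "hcoeff hc t u v = 0") auto
  have "(\<Sum>t = i..<j. hcoeff hc t u v) = (\<Sum>t = i..<cutoff v. hcoeff hc t u v)"
  proof (rule sum.mono_neutral_right)
    show "\<forall>t\<in>{i..<j} - {i..<cutoff v}. hcoeff hc t u v = 0"
      using zero by force
  qed (use bounds in auto)
  also have "\<dots> = (\<Sum>t<cutoff v. hcoeff hc t u v)"
  proof (rule sum.mono_neutral_left)
    show "\<forall>t\<in>{..<cutoff v} - {i..<cutoff v}. hcoeff hc t u v = 0"
      using zero by force
  qed auto
  finally show ?thesis unfolding coeff_sum_def by simp
qed

lemma coeff_sum_relation_outside_cob_pairs:
  assumes "(i, j) \<in> I" "u \<in> jsupp j" "v \<in> jsupp i" "(u, v) \<notin> cob_pairs"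
  shows "coeff_sum hc (u, v) = 0"
proof -
  have "hcoeff hc t u v = 0" for t
  proof (rule ccontr)
    assume "hcoeff hc t u v \<noteq> 0"
    then have "u \<le> t" "t < cutoff v" using hcoeff_nonzero[of hc t u v] by simp_all
    then show False using assms(4) relation_witness_bounds[OF assms(1-3)] unfolding cob_pairs_def by simp
  qed
  then show ?thesis unfolding coeff_sum_def by simp
qed

lemma ext_cocycles_iff:
  "hc \<in> ext_cocycles m I (jdim I) (jmap I) (jdim I) (jmap I) \<longleftrightarrow>
     hsupp m (jdim I) (jdim I) hc \<and> (\<forall>p\<in>rel_pairs. coeff_sum hc p = 0)"
proof -
  have "(\<forall>(i, j)\<in>I. \<forall>u\<in>jsupp j. \<forall>v\<in>jsupp i. (\<Sum>t = i..<j. hcoeff hc t u v) = 0) \<longleftrightarrow>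
      (\<forall>p\<in>rel_pairs. coeff_sum hc p = 0)" (is "?sums \<longleftrightarrow> ?pairs")
  proof
    assume sums: ?sums
    show ?pairs
    proof
      fix p assume "p \<in> rel_pairs"
      then obtain u v i j where p: "p = (u, v)" "(i, j) \<in> I" "u \<in> jsupp j" "v \<in> jsupp i"
        unfolding rel_pairs_def by auto
      then have "(\<Sum>t = i..<j. hcoeff hc t u v) = 0" using bspec[OF sums p(2)] by simp
      then show "coeff_sum hc p = 0" using sum_hcoeff_relation[OF p(2-4), of hc] p(1) by simp
    qed
  next
    assume pairs: ?pairs
    show ?sums
    proof (rule ballI, clarify)
      fix i j u v assume w: "(i, j) \<in> I" "u \<in> jsupp j" "v \<in> jsupp i"
      have "coeff_sum hc (u, v) = 0"
      proof (cases "(u, v) \<in> cob_pairs")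
        case True
        then have "(u, v) \<in> rel_pairs" unfolding rel_pairs_def using w by auto
        then show ?thesis using pairs by blast
      next
        case False
        then show ?thesis by (rule coeff_sum_relation_outside_cob_pairs[OF w])
      qed
      then show "(\<Sum>t = i..<j. hcoeff hc t u v) = 0" using sum_hcoeff_relation[OF w, of hc] by simp
    qed
  qed
  then show ?thesis unfolding ext_cocycles_iff_relations by simp
qed

lemma coboundary_entry:
  fixes g :: "nat \<Rightarrow> 'k::field mat"
  assumes g: "\<forall>j<m. g j \<in> carrier_mat (jdim I j) (jdim I j)"
    and t: "Suc t < m" and u: "u \<in> jsupp (Suc t)" and v: "v \<in> jsupp t"
  shows "(jmap I t * g t - g (Suc t) * jmap I t) $$ (jpos (Suc t) u, jpos t v) =
    (if u \<in> jsupp t then g t $$ (jpos t u, jpos t v) else 0) -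
    (if v \<in> jsupp (Suc t) then g (Suc t) $$ (jpos (Suc t) u, jpos (Suc t) v) else 0)"
proof -
  have r: "jpos (Suc t) u < jdim I (Suc t)" and s: "jpos t v < jdim I t"
    using jpos_less u v by auto
  have gt: "g t \<in> carrier_mat (jdim I t) (jdim I t)" and gs: "g (Suc t) \<in> carrier_mat (jdim I (Suc t)) (jdim I (Suc t))"
    using g t by auto
  have "dim_row (g (Suc t) * jmap I t) = jdim I (Suc t)" "dim_col (g (Suc t) * jmap I t) = jdim I t"
    using gs jmap_carrier[of t] by auto
  then show ?thesis
    using selection_mult_entry[OF jmap_carrier gt r s jmap_entry[OF r]]
      mult_selection_entry[OF gs jmap_carrier r s jmap_entry'[OF _ s]] u v r s
    by (simp add: index_minus_mat)
qed

lemma coeff_sum_coboundary: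
  assumes "hc \<in> ext_coboundaries m (jdim I) (jmap I) (jdim I) (jmap I)" and "(u, v) \<in> cob_pairs"
  shows "coeff_sum hc (u, v) = 0"
proof -
  obtain g where g: "\<forall>j<m. g j \<in> carrier_mat (jdim I j) (jdim I j)"
    and hc: "\<forall>j. Suc j < m \<longrightarrow> hmatJ hc j = jmap I j * g j - g (Suc j) * jmap I j"
    using assms(1) unfolding ext_coboundaries_def by auto
  have uv: "v < u" "u < cutoff v" "cutoff v < cutoff u" "cutoff u \<le> m"
    using assms(2) cutoff_le unfolding cob_pairs_def by auto
  define G where "G t = (if u < t \<and> t < cutoff v then g t $$ (jpos t u, jpos t v) else 0)" for t
  have telescope: "hcoeff hc t u v = G t - G (Suc t)" if "u \<le> t" "t < cutoff v" for t
  proof -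
    have t: "Suc t < m" "t < m" using that uv by auto
    have u: "u \<in> jsupp (Suc t)" "u \<in> jsupp t \<longleftrightarrow> u < t"
      using mem_jsupp[OF t(1)] mem_jsupp[OF t(2)] that uv by auto
    have v: "v \<in> jsupp t" "v \<in> jsupp (Suc t) \<longleftrightarrow> Suc t < cutoff v"
      using mem_jsupp[OF t(1)] mem_jsupp[OF t(2)] that uv by auto
    have "hcoeff hc t u v = hmatJ hc t $$ (jpos (Suc t) u, jpos t v)"
      unfolding hcoeff_def hmat_def using t u v jpos_less by simp
    also have "\<dots> = G t - G (Suc t)"
      using hc t coboundary_entry[OF g t(1) u(1) v(1)] u(2) v(2) that unfolding G_def by auto
    finally show ?thesis .
  qed
  have below: "hcoeff hc t u v = 0" if "t < u" for t
    using that hcoeff_nonzero[of hc t u v] by (cases "hcoeff hc t u v = 0") auto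
  have "coeff_sum hc (u, v) = (\<Sum>t = u..<cutoff v. hcoeff hc t u v)"
    unfolding coeff_sum_def fst_conv snd_conv
  proof (rule sum.mono_neutral_right)
    show "\<forall>t\<in>{..<cutoff v} - {u..<cutoff v}. hcoeff hc t u v = 0"
      using below by force
  qed auto
  also have "\<dots> = (\<Sum>t = u..<cutoff v. (- G (Suc t)) - (- G t))"
    using telescope by simp
  also have "\<dots> = G u - G (cutoff v)"
    using sum_Suc_diff'[of u "cutoff v" "\<lambda>t. - G t"] uv by simp
  finally show ?thesis unfolding G_def by simp
qed

text \<open>Negated partial sums of the coefficients of hc, so that differences along the arrows give
  back hc; the correction at t = cutoff v - 1 vanishes exactly when the sums over cob_pairs do.\<close>

definition cob_witness :: "(nat \<Rightarrow> nat \<Rightarrow> nat \<Rightarrow> 'k::field) \<Rightarrow> nat \<Rightarrow> 'k mat" where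
  "cob_witness hc t = mat (jdim I t) (jdim I t) (\<lambda>(r, s). - (\<Sum>t'<t. hcoeff hc t' (jsrc t r) (jsrc t s)))"

lemma cob_witness_entry:
  "u \<in> jsupp t \<Longrightarrow> v \<in> jsupp t \<Longrightarrow> cob_witness hc t $$ (jpos t u, jpos t v) = - (\<Sum>t'<t. hcoeff hc t' u v)"
  unfolding cob_witness_def using jpos_less by simp

lemma cob_witness_coboundary_entry:
  assumes t: "Suc t < m" and u: "u \<in> jsupp (Suc t)" and v: "v \<in> jsupp t"
  shows "(jmap I t * cob_witness hc t - cob_witness hc (Suc t) * jmap I t) $$ (jpos (Suc t) u, jpos t v) =
    (if u < t then - (\<Sum>t'<t. hcoeff hc t' u v) else 0) -
    (if Suc t < cutoff v then - (\<Sum>t'<Suc t. hcoeff hc t' u v) else 0)"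
proof -
  have carrier: "\<forall>j<m. cob_witness hc j \<in> carrier_mat (jdim I j) (jdim I j)"
    by (simp add: cob_witness_def)
  have "u \<in> jsupp t \<longleftrightarrow> u < t" "v \<in> jsupp (Suc t) \<longleftrightarrow> Suc t < cutoff v"
    using u v mem_jsupp[of t] mem_jsupp[OF t] t by auto
  then show ?thesis
    using coboundary_entry[OF carrier t u v] cob_witness_entry[of u t v hc] cob_witness_entry[of u "Suc t" v hc] u v
    by auto
qed

lemma hmatJ_eq_coboundary:
  assumes sums: "\<forall>p\<in>cob_pairs. coeff_sum hc p = 0" and t: "Suc t < m"
  shows "hmatJ hc t = jmap I t * cob_witness hc t - cob_witness hc (Suc t) * jmap I t"
proof (rule eq_matI)
  fix r s assume "r < dim_row (jmap I t * cob_witness hc t - cob_witness hc (Suc t) * jmap I t)"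
    "s < dim_col (jmap I t * cob_witness hc t - cob_witness hc (Suc t) * jmap I t)"
  then have r: "r < jdim I (Suc t)" and s: "s < jdim I t" by (simp_all add: cob_witness_def jmap_def)
  define u where "u = jsrc (Suc t) r"
  define v where "v = jsrc t s"
  have uS: "u \<in> jsupp (Suc t)" and vS: "v \<in> jsupp t" and rs: "r = jpos (Suc t) u" "s = jpos t v"
    unfolding u_def v_def using r s jsrc_in_jsupp by auto
  have ub: "u < Suc t" "Suc t < cutoff u" and vb: "v < t" "t < cutoff v"
    using uS vS mem_jsupp[OF t] mem_jsupp[of t] t by auto
  define A where "A = (\<Sum>t'<t. hcoeff hc t' u v)"
  have A0: "A = 0" if "u = t"
    unfolding A_def using that hcoeff_nonzero[of hc _ u v] by (intro sum.neutral) (metis lessThan_iff not_le)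
  have "hmatJ hc t $$ (r, s) = hcoeff hc t u v"
    unfolding hcoeff_def hmat_def using r s t uS vS rs by simp
  also have "\<dots> = (if u < t then - A else 0) - (if Suc t < cutoff v then - (A + hcoeff hc t u v) else 0)"
  proof (cases "Suc t < cutoff v")
    case True
    then show ?thesis using A0 ub by (cases "u < t") auto
  next
    case False
    then have "cutoff v = Suc t" using vb by simp
    moreover have "v < u" using cutoff_mono[of u v] ub \<open>cutoff v = Suc t\<close> by (cases "v < u") auto
    ultimately have "(u, v) \<in> cob_pairs" unfolding cob_pairs_def using ub by auto
    then have "coeff_sum hc (u, v) = 0" using sums by blast
    then have "A + hcoeff hc t u v = 0"
      unfolding coeff_sum_def A_def using \<open>cutoff v = Suc t\<close> by simp
    then show ?thesis using False A0 ub by (cases "u < t") (auto simp: add_eq_0_iff)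
  qed
  also have "\<dots> = (jmap I t * cob_witness hc t - cob_witness hc (Suc t) * jmap I t) $$ (r, s)"
    using cob_witness_coboundary_entry[OF t uS vS, of hc] unfolding rs A_def by simp
  finally show "hmatJ hc t $$ (r, s) = (jmap I t * cob_witness hc t - cob_witness hc (Suc t) * jmap I t) $$ (r, s)" .
qed (simp_all add: hmat_def cob_witness_def jmap_def)

lemma ext_coboundaries_iff:
  "hc \<in> ext_coboundaries m (jdim I) (jmap I) (jdim I) (jmap I) \<longleftrightarrow>
     hsupp m (jdim I) (jdim I) hc \<and> (\<forall>p\<in>cob_pairs. coeff_sum hc p = 0)"
proof
  assume "hc \<in> ext_coboundaries m (jdim I) (jmap I) (jdim I) (jmap I)"
  then show "hsupp m (jdim I) (jdim I) hc \<and> (\<forall>p\<in>cob_pairs. coeff_sum hc p = 0)"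
    using coeff_sum_coboundary unfolding ext_coboundaries_def by auto
next
  assume "hsupp m (jdim I) (jdim I) hc \<and> (\<forall>p\<in>cob_pairs. coeff_sum hc p = 0)"
  then show "hc \<in> ext_coboundaries m (jdim I) (jmap I) (jdim I) (jmap I)"
    unfolding ext_coboundaries_def using hmatJ_eq_coboundary
    by (auto intro!: exI[of _ "cob_witness hc"] simp: cob_witness_def)
qed

end

section \<open>Dimension of Ext^1(J, J)\<close>

context vector_space
begin

context
  fixes \<phi> :: "'i \<Rightarrow> 'b \<Rightarrow> 'a"
  assumes phi_add: "\<And>p x y. \<phi> p (x + y) = \<phi> p x + \<phi> p y"
    and phi_scale: "\<And>p c x. \<phi> p (c *s x) = c * \<phi> p x"
begin

lemma phi_zero: "\<phi> p 0 = 0"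
  using phi_scale[of p 0 0] by simp

lemma phi_diff: "\<phi> p (x - y) = \<phi> p x - \<phi> p y"
  using phi_add[of p "x - y" y] by simp

lemma phi_sum: "\<phi> p (sum f A) = (\<Sum>a\<in>A. \<phi> p (f a))"
  by (induction A rule: infinite_finite_induct) (simp_all add: phi_zero phi_add)

lemma phi_span_eq_0:
  assumes "\<forall>x\<in>A. \<phi> p x = 0" "y \<in> span A"
  shows "\<phi> p y = 0"
proof -
  have "subspace {x. \<phi> p x = 0}"
    by (rule subspaceI) (auto simp: phi_zero phi_add phi_scale)
  then have "span A \<subseteq> {x. \<phi> p x = 0}"
    using assms(1) by (intro span_minimal) auto
  then show ?thesis using assms(2) by auto
qed

lemma independent_Un_dual_image:
  assumes "independent B" "finite E" "\<forall>b\<in>B. \<forall>e\<in>E. \<phi> e b = 0"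
    and "\<And>e e'. e \<in> E \<Longrightarrow> e' \<in> E \<Longrightarrow> \<phi> e (z e') = (if e = e' then 1 else 0)"
  shows "independent (B \<union> z ` E)"
  using assms(2-4)
proof (induction E rule: finite_induct)
  case (insert e E)
  have "\<forall>x\<in>B \<union> z ` E. \<phi> e x = 0"
    using insert.prems insert.hyps(2) by auto
  moreover have "\<phi> e (z e) = 1"
    using insert.prems by simp
  ultimately have "z e \<notin> span (B \<union> z ` E)"
    using phi_span_eq_0 by fastforce
  moreover have "independent (B \<union> z ` E)"
    using insert by simp
  ultimately show ?case
    using independent_insertI by (metis Un_insert_right image_insert)
qed (use assms(1) in simp)

lemma kernel_subset_span_dual:
  assumes V: "subspace V" and E: "finite E" "P \<inter> E = {}"
    and z: "\<And>e. e \<in> E \<Longrightarrow> z e \<in> V" "\<And>e q. e \<in> E \<Longrightarrow> \<phi> q (z e) = (if q = e then 1 else 0)"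
    and B: "{h \<in> V. \<forall>p\<in>P \<union> E. \<phi> p h = 0} \<subseteq> span Bb"
  shows "{h \<in> V. \<forall>p\<in>P. \<phi> p h = 0} \<subseteq> span (Bb \<union> z ` E)"
proof
  fix h assume h: "h \<in> {h \<in> V. \<forall>p\<in>P. \<phi> p h = 0}"
  define s where "s = (\<Sum>e\<in>E. \<phi> e h *s z e)"
  have "\<phi> p s = (if p \<in> E then \<phi> p h else 0)" for p
  proof -
    have "\<phi> p s = (\<Sum>e\<in>E. \<phi> e h * \<phi> p (z e))"
      unfolding s_def phi_sum phi_scale ..
    also have "\<dots> = (\<Sum>e\<in>E. if p = e then \<phi> e h else 0)"
      using z(2) by (intro sum.cong) auto
    finally show ?thesis using E(1) by (simp add: sum.delta')
  qed
  then have "\<forall>p\<in>P \<union> E. \<phi> p (h - s) = 0"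
    using h E(2) by (auto simp: phi_diff)
  moreover have "h - s \<in> V"
    unfolding s_def using V h z(1) by (intro subspace_diff subspace_sum subspace_scale) auto
  ultimately have "h - s \<in> span (Bb \<union> z ` E)"
    using B span_mono[of Bb "Bb \<union> z ` E"] by auto
  moreover have "s \<in> span (Bb \<union> z ` E)"
    unfolding s_def by (intro span_sum span_scale span_base) auto
  ultimately show "h \<in> span (Bb \<union> z ` E)"
    using span_add by fastforce
qed

lemma dim_kernel_dual:
  assumes V: "subspace V" "finite W" "V \<subseteq> span W"
    and E: "finite E" "P \<inter> E = {}"
    and z: "\<And>e. e \<in> E \<Longrightarrow> z e \<in> V" "\<And>e q. e \<in> E \<Longrightarrow> \<phi> q (z e) = (if q = e then 1 else 0)"
  shows "dim {h \<in> V. \<forall>p\<in>P. \<phi> p h = 0} = dim {h \<in> V. \<forall>p\<in>P \<union> E. \<phi> p h = 0} + card E"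
proof -
  let ?Z = "{h \<in> V. \<forall>p\<in>P. \<phi> p h = 0}" and ?B = "{h \<in> V. \<forall>p\<in>P \<union> E. \<phi> p h = 0}"
  obtain Bb where Bb: "Bb \<subseteq> ?B" "independent Bb" "?B \<subseteq> span Bb" "card Bb = dim ?B"
    using basis_exists by blast
  have "Bb \<subseteq> span W"
    using Bb(1) V(3) by auto
  then have "finite Bb"
    using independent_span_bound[OF V(2) Bb(2)] by simp
  have indep: "independent (Bb \<union> z ` E)"
    using Bb(1,2) E(1) z(2) by (intro independent_Un_dual_image) auto
  have sub: "Bb \<union> z ` E \<subseteq> ?Z"
    using Bb(1) z E(2) by auto
  have spans: "?Z \<subseteq> span (Bb \<union> z ` E)"
    using kernel_subset_span_dual[OF V(1) E z Bb(3)] .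
  have "z e \<notin> Bb" if "e \<in> E" for e
    using that Bb(1) z(2)[OF that, of e] by auto
  then have "Bb \<inter> z ` E = {}" by auto
  moreover have "inj_on z E"
  proof (rule inj_onI)
    fix e e' assume "e \<in> E" "e' \<in> E" "z e = z e'"
    then show "e = e'" using z(2)[of e e'] z(2)[of e' e'] by (metis one_neq_zero)
  qed
  ultimately have "card (Bb \<union> z ` E) = card Bb + card E"
    using \<open>finite Bb\<close> E(1) by (simp add: card_Un_disjoint card_image)
  then show ?thesis
    using dim_unique[OF sub spans indep] Bb(4) by simp
qed

end

end

lemma sum_fun_apply: "sum f A x = (\<Sum>a\<in>A. f a x)"
  by (induction A rule: infinite_finite_induct) auto

lemma vector_space_cscale: "vector_space (cscale :: 'k::field \<Rightarrow> (nat \<Rightarrow> nat \<Rightarrow> nat \<Rightarrow> 'k) \<Rightarrow> _)"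
  unfolding vector_space_def cscale_def by (auto simp: fun_eq_iff algebra_simps)

context lin_nakayama
begin

definition hdelta :: "nat \<times> nat \<times> nat \<Rightarrow> nat \<Rightarrow> nat \<Rightarrow> nat \<Rightarrow> 'k::field" where
  "hdelta x = (\<lambda>t r s. if (t, r, s) = x then 1 else 0)"

definition hsupp_dom :: "(nat \<times> nat \<times> nat) set" where
  "hsupp_dom = {(t, r, s). Suc t < m \<and> r < jdim I (Suc t) \<and> s < jdim I t}"

lemma finite_hsupp_dom: "finite hsupp_dom"
proof (rule finite_subset)
  show "hsupp_dom \<subseteq> {..<m} \<times> {..<m} \<times> {..<m}"
  proof
    fix x assume "x \<in> hsupp_dom"
    then obtain t r s where "x = (t, r, s)" "Suc t < m" "r < jdim I (Suc t)" "s < jdim I t"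
      unfolding hsupp_dom_def by auto
    then show "x \<in> {..<m} \<times> {..<m} \<times> {..<m}"
      using jdim_le[of t] jdim_le[of "Suc t"] by auto
  qed
qed simp

lemma subspace_hsupp: "module.subspace cscale {hc :: nat \<Rightarrow> nat \<Rightarrow> nat \<Rightarrow> 'k::field. hsupp m (jdim I) (jdim I) hc}"
proof -
  interpret vs: vector_space "cscale :: 'k \<Rightarrow> (nat \<Rightarrow> nat \<Rightarrow> nat \<Rightarrow> 'k) \<Rightarrow> _"
    by (rule vector_space_cscale)
  show ?thesis
  proof (rule vs.subspaceI)
    fix x y :: "nat \<Rightarrow> nat \<Rightarrow> nat \<Rightarrow> 'k"
    assume "x \<in> {hc. hsupp m (jdim I) (jdim I) hc}" "y \<in> {hc. hsupp m (jdim I) (jdim I) hc}"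
    moreover have "x j r s \<noteq> 0 \<or> y j r s \<noteq> 0" if "(x + y) j r s \<noteq> 0" for j r s
      using that by auto
    ultimately show "x + y \<in> {hc. hsupp m (jdim I) (jdim I) hc}"
      unfolding hsupp_def by blast
  qed (auto simp: hsupp_def cscale_def)
qed

lemma hsupp_subset_span:
  "{hc :: nat \<Rightarrow> nat \<Rightarrow> nat \<Rightarrow> 'k::field. hsupp m (jdim I) (jdim I) hc} \<subseteq> module.span cscale (hdelta ` hsupp_dom)"
proof
  interpret vs: vector_space "cscale :: 'k \<Rightarrow> (nat \<Rightarrow> nat \<Rightarrow> nat \<Rightarrow> 'k) \<Rightarrow> _"
    by (rule vector_space_cscale)
  fix h :: "nat \<Rightarrow> nat \<Rightarrow> nat \<Rightarrow> 'k" assume h: "h \<in> {hc. hsupp m (jdim I) (jdim I) hc}"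
  have "h = (\<Sum>x\<in>hsupp_dom. cscale (h (fst x) (fst (snd x)) (snd (snd x))) (hdelta x))"
  proof (intro ext)
    fix t r s
    have "(\<Sum>x\<in>hsupp_dom. cscale (h (fst x) (fst (snd x)) (snd (snd x))) (hdelta x)) t r s =
        (\<Sum>x\<in>hsupp_dom. if x = (t, r, s) then h t r s else 0)"
      unfolding cscale_def hdelta_def sum_fun_apply by (intro sum.cong) auto
    also have "\<dots> = h t r s"
      using h finite_hsupp_dom unfolding hsupp_def hsupp_dom_def by auto
    finally show "h t r s = (\<Sum>x\<in>hsupp_dom. cscale (h (fst x) (fst (snd x)) (snd (snd x))) (hdelta x)) t r s" ..
  qed
  also have "\<dots> \<in> vs.span (hdelta ` hsupp_dom)"
    by (intro vs.span_sum vs.span_scale vs.span_base) auto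
  finally show "h \<in> vs.span (hdelta ` hsupp_dom)" .
qed

definition pair_cochain :: "nat \<times> nat \<Rightarrow> nat \<Rightarrow> nat \<Rightarrow> nat \<Rightarrow> 'k::field" where
  "pair_cochain e = hdelta (fst e, jpos (Suc (fst e)) (fst e), jpos (fst e) (snd e))"

lemma cob_pairs_jsupp:
  assumes "(u, v) \<in> cob_pairs"
  shows "Suc u < m" "u \<in> jsupp (Suc u)" "v \<in> jsupp u"
  using assms cob_pairs_bounds[OF assms] mem_jsupp[of "Suc u" u] mem_jsupp[of u v]
  unfolding cob_pairs_def by auto

lemma hsupp_pair_cochain: "e \<in> cob_pairs \<Longrightarrow> hsupp m (jdim I) (jdim I) (pair_cochain e)"
  unfolding hsupp_def pair_cochain_def hdelta_def using cob_pairs_jsupp jpos_less by (cases e) auto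

lemma coeff_sum_pair_cochain:
  assumes e: "e \<in> cob_pairs"
  shows "coeff_sum (pair_cochain e) q = (if q = e then 1 else 0)"
proof -
  obtain u v where uv: "e = (u, v)" by force
  obtain u' v' where q: "q = (u', v')" by force
  note supp = cob_pairs_jsupp[OF e[unfolded uv]]
  have h: "hcoeff (pair_cochain (u, v)) t u' v' = (if t = u \<and> u' = u \<and> v' = v then 1 else 0)" for t
    unfolding hcoeff_def pair_cochain_def hdelta_def
    using supp jpos_inj[of u' "Suc u" u] jpos_inj[of v' u v] by auto
  have "u < cutoff v" using e uv unfolding cob_pairs_def by auto
  then show ?thesis
    unfolding coeff_sum_def q uv fst_conv snd_conv h by (cases "u' = u \<and> v' = v") (auto simp: sum.delta)
qed

theorem ext1_JJ_eq_card: "ext1_JJ TYPE('k::field) m I = card (cob_pairs - rel_pairs)"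
proof -
  interpret vs: vector_space "cscale :: 'k \<Rightarrow> (nat \<Rightarrow> nat \<Rightarrow> nat \<Rightarrow> 'k) \<Rightarrow> _"
    by (rule vector_space_cscale)
  define V where "V = {hc :: nat \<Rightarrow> nat \<Rightarrow> nat \<Rightarrow> 'k. hsupp m (jdim I) (jdim I) hc}"
  have "ext_cocycles m I (jdim I) (jmap I :: nat \<Rightarrow> 'k mat) (jdim I) (jmap I) =
      {h \<in> V. \<forall>p\<in>rel_pairs. coeff_sum h p = 0}"
    unfolding V_def using ext_cocycles_iff by blast
  moreover have "rel_pairs \<union> (cob_pairs - rel_pairs) = cob_pairs"
    unfolding rel_pairs_def by auto
  then have "ext_coboundaries m (jdim I) (jmap I :: nat \<Rightarrow> 'k mat) (jdim I) (jmap I) =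
      {h \<in> V. \<forall>p\<in>rel_pairs \<union> (cob_pairs - rel_pairs). coeff_sum h p = 0}"
    unfolding V_def using ext_coboundaries_iff by auto
  moreover have "vs.dim {h \<in> V. \<forall>p\<in>rel_pairs. coeff_sum h p = 0} =
      vs.dim {h \<in> V. \<forall>p\<in>rel_pairs \<union> (cob_pairs - rel_pairs). coeff_sum h p = 0} + card (cob_pairs - rel_pairs)"
  proof (rule vs.dim_kernel_dual[where \<phi> = "\<lambda>p h. coeff_sum h p" and z = pair_cochain])
    show "coeff_sum (x + y) p = coeff_sum x p + coeff_sum y p" for p x y
      unfolding coeff_sum_def hcoeff_def by (simp add: sum.distrib[symmetric] if_distrib cong: if_cong)
    show "coeff_sum (cscale c x) p = c * coeff_sum x p" for p c x
      unfolding coeff_sum_def hcoeff_def cscale_def by (simp add: sum_distrib_left if_distrib cong: if_cong)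
    show "vs.subspace V" "V \<subseteq> vs.span (hdelta ` hsupp_dom)"
      unfolding V_def by (rule subspace_hsupp, rule hsupp_subset_span)
    show "pair_cochain e \<in> V" if "e \<in> cob_pairs - rel_pairs" for e
      unfolding V_def mem_Collect_eq by (rule hsupp_pair_cochain) (use that in simp)
    show "coeff_sum (pair_cochain e) q = (if q = e then 1 else 0)" if "e \<in> cob_pairs - rel_pairs" for e q
      by (rule coeff_sum_pair_cochain) (use that in simp)
  qed (use finite_hsupp_dom finite_cob_pairs in auto)
  ultimately show ?thesis
    unfolding ext1_JJ_def ext1_dim_def by simp
qed

lemma cob_pairs_diff_rel_pairs:
  "cob_pairs - rel_pairs = {(u, v). v < u \<and> u < cutoff v \<and> cutoff v < cutoff u \<and> cutoff (Suc v) = cutoff u}"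
proof -
  have "(u, v) \<in> rel_pairs \<longleftrightarrow> cutoff (Suc v) < cutoff u" if uv: "(u, v) \<in> cob_pairs" for u v
  proof
    assume "(u, v) \<in> rel_pairs"
    then obtain i j where w: "(i, j) \<in> I" "u \<in> jsupp j" "v \<in> jsupp i"
      unfolding rel_pairs_def by auto
    note bounds = relation_witness_bounds[OF w]
    have "cutoff (Suc v) \<le> cutoff i" using bounds cutoff_mono by simp
    moreover have "cutoff i \<le> j" using w(1) in_ideal_iff bounds by simp
    ultimately show "cutoff (Suc v) < cutoff u" using bounds by simp
  next
    assume less: "cutoff (Suc v) < cutoff u"
    define j where "j = cutoff (Suc v)"
    have b: "v < u" "u < cutoff v" "cutoff v \<le> j" "j < m"
      using uv less cutoff_le[of u] cutoff_mono[of v "Suc v"] unfolding cob_pairs_def j_def by auto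
    then have "(Suc v, j) \<in> I" "Suc v < m"
      using in_ideal_iff[of j "Suc v"] unfolding j_def by auto
    moreover have "u \<in> jsupp j" "v \<in> jsupp (Suc v)"
      using b less mem_jsupp[of j u] mem_jsupp[of "Suc v" v] \<open>Suc v < m\<close> unfolding j_def by auto
    ultimately show "(u, v) \<in> rel_pairs"
      unfolding rel_pairs_def using uv by blast
  qed
  moreover have "cutoff (Suc v) \<le> cutoff u" if "(u, v) \<in> cob_pairs" for u v
    using that cutoff_mono unfolding cob_pairs_def by simp
  ultimately show ?thesis
    unfolding cob_pairs_def by fastforce
qed

end

section \<open>Ideals as cutoff sequences\<close>

definition cutoff_seq :: "nat \<Rightarrow> (nat \<times> nat) set \<Rightarrow> nat list" where
  "cutoff_seq m I = map (lin_nakayama.cutoff m I) [0..<m]"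

definition ideal_of_seq :: "nat \<Rightarrow> nat list \<Rightarrow> (nat \<times> nat) set" where
  "ideal_of_seq m c = {(i, j). i < m \<and> j < m \<and> c ! i \<le> j}"

context lin_nakayama
begin

lemma cutoff_seq_nth: "i < m \<Longrightarrow> cutoff_seq m I ! i = cutoff i"
  unfolding cutoff_seq_def by simp

lemma cutoff_seq_in_cutoff_seqs: "cutoff_seq m I \<in> cutoff_seqs m"
proof -
  have "sorted (cutoff_seq m I)"
    unfolding sorted_iff_nth_mono using cutoff_mono by (simp add: cutoff_seq_def)
  moreover have "min (i + 2) m \<le> cutoff_seq m I ! i \<and> cutoff_seq m I ! i \<le> m" if "i < m" for i
    using cutoff_ge[of i] cutoff_le[of i] that by (cases "cutoff i < m") (auto simp: cutoff_seq_nth)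
  ultimately show ?thesis
    unfolding cutoff_seqs_def by (simp add: cutoff_seq_def)
qed

lemma ideal_of_cutoff_seq: "ideal_of_seq m (cutoff_seq m I) = I"
proof (rule Set.set_eqI)
  fix p :: "nat \<times> nat"
  obtain i j where p: "p = (i, j)" by force
  show "p \<in> ideal_of_seq m (cutoff_seq m I) \<longleftrightarrow> p \<in> I"
    using ideal_bounds[of i j] in_ideal_iff[of j i] cutoff_seq_nth[of i]
    unfolding ideal_of_seq_def p by auto
qed

lemma ext1_JJ_eq_card_ext_pairs: "ext1_JJ TYPE('k::field) m I = card (ext_pairs (cutoff_seq m I))"
proof -
  have "cob_pairs - rel_pairs = ext_pairs (cutoff_seq m I)"
  proof (rule Set.set_eqI)
    fix p :: "nat \<times> nat"
    obtain u v where p: "p = (u, v)" by force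
    have "u < m" if "v < u" "u < cutoff v" using that cutoff_le[of v] by simp
    then show "p \<in> cob_pairs - rel_pairs \<longleftrightarrow> p \<in> ext_pairs (cutoff_seq m I)"
      unfolding cob_pairs_diff_rel_pairs ext_pairs_def p
      using cutoff_seq_nth[of u] cutoff_seq_nth[of v] cutoff_seq_nth[of "Suc v"]
      by (auto simp: cutoff_seq_def)
  qed
  then show ?thesis using ext1_JJ_eq_card by simp
qed

end

lemma lin_nak_ideal_of_seq:
  assumes c: "c \<in> cutoff_seqs m"
  shows "lin_nak_ideal m (ideal_of_seq m c)"
  unfolding lin_nak_ideal_def
proof (intro conjI allI impI)
  show "ideal_of_seq m c \<subseteq> {(i, j). i + 2 \<le> j \<and> j < m}"
  proof
    fix p assume "p \<in> ideal_of_seq m c"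
    then obtain i j where p: "p = (i, j)" "i < m" "j < m" "c ! i \<le> j"
      unfolding ideal_of_seq_def by auto
    then have "i + 2 \<le> j" using cutoff_seqsD(3)[OF c p(2)] by (cases "i + 2 \<le> m") auto
    then show "p \<in> {(i, j). i + 2 \<le> j \<and> j < m}" using p by auto
  qed
next
  fix i j i' j' assume "(i, j) \<in> ideal_of_seq m c" "i' \<le> i" "j \<le> j'" "j' < m"
  then show "(i', j') \<in> ideal_of_seq m c"
    using cutoff_seqs_mono[OF c, of i' i] unfolding ideal_of_seq_def by auto
qed

lemma cutoff_seq_ideal_of_seq:
  assumes c: "c \<in> cutoff_seqs m"
  shows "cutoff_seq m (ideal_of_seq m c) = c"
proof -
  interpret lin_nakayama m "ideal_of_seq m c"
    using lin_nak_ideal_of_seq[OF c] by unfold_locales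
  have "cutoff i = c ! i" if "i < m" for i
    unfolding cutoff_def
  proof (rule Least_equality)
    show "c ! i = m \<or> (i, c ! i) \<in> ideal_of_seq m c"
      using that cutoff_seqsD(4)[OF c that] unfolding ideal_of_seq_def by auto
  next
    fix y assume "y = m \<or> (i, y) \<in> ideal_of_seq m c"
    then show "c ! i \<le> y"
      using cutoff_seqsD(4)[OF c that] unfolding ideal_of_seq_def by auto
  qed
  then show ?thesis
    using cutoff_seqsD(1)[OF c] by (intro nth_equalityI) (auto simp: cutoff_seq_nth cutoff_seq_def)
qed

lemma bij_betw_cutoff_seq: "bij_betw (cutoff_seq m) {I. lin_nak_ideal m I} (cutoff_seqs m)"
proof (rule bij_betw_byWitness[where f' = "ideal_of_seq m"])
  show "\<forall>I\<in>{I. lin_nak_ideal m I}. ideal_of_seq m (cutoff_seq m I) = I"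
    using lin_nakayama.ideal_of_cutoff_seq lin_nakayama.intro by blast
  show "cutoff_seq m ` {I. lin_nak_ideal m I} \<subseteq> cutoff_seqs m"
    using lin_nakayama.cutoff_seq_in_cutoff_seqs lin_nakayama.intro by blast
  show "\<forall>c\<in>cutoff_seqs m. cutoff_seq m (ideal_of_seq m c) = c"
    using cutoff_seq_ideal_of_seq by blast
  show "ideal_of_seq m ` cutoff_seqs m \<subseteq> {I. lin_nak_ideal m I}"
    using lin_nak_ideal_of_seq by blast
qed

lemma card_ideals_ext1_eq_ballot:
  assumes "k \<le> n"
  shows "card {I. lin_nak_ideal (n + 2) I \<and> ext1_JJ TYPE('k::field) (n + 2) I = k} = ballot n k"
proof -
  let ?m = "n + 2" and ?A = "{I. lin_nak_ideal (n + 2) I}"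
  let ?P = "\<lambda>c. card (ext_pairs c) = k"
  have bij: "inj_on (cutoff_seq ?m) ?A" "cutoff_seq ?m ` ?A = cutoff_seqs ?m"
    using bij_betw_cutoff_seq[of ?m] unfolding bij_betw_def by auto
  have ideals: "{I. lin_nak_ideal ?m I \<and> ext1_JJ TYPE('k) ?m I = k} = {I \<in> ?A. ?P (cutoff_seq ?m I)}"
    using lin_nakayama.ext1_JJ_eq_card_ext_pairs[OF lin_nakayama.intro, where 'k = 'k] by auto
  have "card {I \<in> ?A. ?P (cutoff_seq ?m I)} = card (cutoff_seq ?m ` {I \<in> ?A. ?P (cutoff_seq ?m I)})"
    by (rule card_image[symmetric], rule inj_on_subset[OF bij(1)]) auto
  also have "cutoff_seq ?m ` {I \<in> ?A. ?P (cutoff_seq ?m I)} = {c \<in> cutoff_seqs ?m. ?P c}"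
    using bij(2) by auto
  also have "card \<dots> = ballot n k"
    by (rule card_cutoff_seqs_ext_pairs[OF assms])
  finally show ?thesis unfolding ideals .
qed

theorem mainTheorem3:
  fixes n :: nat
  shows "(\<forall>k \<le> n. card {I. lin_nak_ideal (n + 2) I \<and> ext1_JJ TYPE('k::field) (n + 2) I = k}
                   = syt_count n k) \<and>
         real (card {I. lin_nak_ideal (n + 2) I \<and> ext1_JJ TYPE('k::field) (n + 2) I = n})
           = real ((2 * n) choose n) / real (n + 1)"
  using card_ideals_ext1_eq_ballot[where 'k = 'k] syt_count_eq_ballot ballot_diag_catalan by simp

end
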